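(* Let $X$ be a quasi-Banach function space over $\mathbf{R}^d$. If $X\in A$, then $X'$ has the saturation property and hence is a Banach function space, and $X'\in A$ with $[X']_A\le[X]_A$. If $X$ is a Banach function space over $\mathbf{R}^d$ with the Fatou property, then $X\in A$ if and only if $X'\in A$, with $[X']_A=[X]_A$. The same statements hold with $A$ replaced by $A_{\mathrm{strong}}$, and with $A$ replaced by $A_{\mathrm{sparse}}$ (with the corresponding constants $[\cdot]_{A_{\mathrm{strong}}}$, $[\cdot]_{A_{\mathrm{sparse}}}$).
   Context: Cubes are axis-parallel cubes in $\mathbf{R}^d$. A quasi-Banach function space over $\mathbf{R}^d$ is a complete quasi-normed space $X\subseteq L^0(\mathbf{R}^d)$ with the ideal property (if $f\in X$, $|g|\le|f|$ then $g\in X$, $\|g\|_X\le\|f\|_X$) and the saturation property (every set of positive measure contains a subset $F$ of positive measure with $\mathbf{1}_F\in X$); Banach function space if the quasi-norm is a norm. Köthe dual: $X'=\{g:fg\in L^1\ \forall f\in X\}$, $\|g\|_{X'}=\sup_{\|f\|_X=1}\int|fg|$. Fatou property: $0\le f_n\uparrow f$ a.e., $\sup\|f_n\|_X<\infty$ imply $f\in X$, $\|f\|_X=\sup\|f_n\|_X$. $X\in A$: $\mathbf{1}_Q\in X\cap X'$ for all cubes and $[X]_A=\sup_Q|Q|^{-1}\|\mathbf{1}_Q\|_X\|\mathbf{1}_Q\|_{X'}<\infty$. With $A_{\mathcal{P}}f=\sum_{Q\in\mathcal{P}}\big(\frac1{|Q|}\int_Q|f|\big)\mathbf{1}_Q$: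 $X\in A_{\mathrm{strong}}$ (resp. $A_{\mathrm{sparse}}$) means there is $C$ with $\|A_{\mathcal{P}}f\|_X\le C\|f\|_X$ for all $f\in X$ and all pairwise disjoint (resp. sparse) collections of cubes $\mathcal{P}$, the least such $C$ being $[X]_{A_{\mathrm{strong}}}$ (resp. $[X]_{A_{\mathrm{sparse}}}$). A collection $\mathcal{S}$ is sparse if there are pairwise disjoint $E_Q\subseteq Q$ with $|E_Q|\ge\frac12|Q|$. *)

theory Defs
  imports "HOL-Analysis.Analysis"
begin

definition cube :: "'a::euclidean_space set \<Rightarrow> bool" where
  "cube Q \<longleftrightarrow> (\<exists>a r. r > 0 \<and> Q = {x. \<forall>i\<in>Basis. a \<bullet> i \<le> x \<bullet> i \<and> x \<bullet> i < a \<bullet> i + r})"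

text \<open>Elements of L^0 are identified up to a.e. equality; this is
  enforced by the ideal property below.\<close>
definition quasi_normed_space :: "('a::euclidean_space \<Rightarrow> real) set \<Rightarrow> (('a \<Rightarrow> real) \<Rightarrow> real) \<Rightarrow> bool" where
  "quasi_normed_space X N \<longleftrightarrow>
     X \<subseteq> borel_measurable lebesgue \<and>
     (\<lambda>x. 0) \<in> X \<and> (\<forall>f\<in>X. \<forall>g\<in>X. (\<lambda>x. f x + g x) \<in> X) \<and> (\<forall>c. \<forall>f\<in>X. (\<lambda>x. c * f x) \<in> X) \<and>
     (\<forall>f\<in>X. 0 \<le> N f) \<and>
     (\<forall>f\<in>X. N f = 0 \<longleftrightarrow> (AE x in lebesgue. f x = 0)) \<and>
     (\<forall>c. \<forall>f\<in>X. N (\<lambda>x. c * f x) = \<bar>c\<bar> * N f) \<and>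
     (\<exists>K\<ge>1. \<forall>f\<in>X. \<forall>g\<in>X. N (\<lambda>x. f x + g x) \<le> K * (N f + N g))"

definition complete_qn :: "('a::euclidean_space \<Rightarrow> real) set \<Rightarrow> (('a \<Rightarrow> real) \<Rightarrow> real) \<Rightarrow> bool" where
  "complete_qn X N \<longleftrightarrow>
     (\<forall>u. (\<forall>n. u n \<in> X) \<and> (\<forall>e>0. \<exists>M. \<forall>m\<ge>M. \<forall>n\<ge>M. N (\<lambda>x. u m x - u n x) < e)
          \<longrightarrow> (\<exists>f\<in>X. (\<lambda>n. N (\<lambda>x. u n x - f x)) \<longlonglongrightarrow> 0))"

definition ideal_property :: "('a::euclidean_space \<Rightarrow> real) set \<Rightarrow> (('a \<Rightarrow> real) \<Rightarrow> real) \<Rightarrow> bool" where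
  "ideal_property X N \<longleftrightarrow>
     (\<forall>f\<in>X. \<forall>g\<in>borel_measurable lebesgue. (AE x in lebesgue. \<bar>g x\<bar> \<le> \<bar>f x\<bar>) \<longrightarrow> g \<in> X \<and> N g \<le> N f)"

definition saturation_property :: "('a::euclidean_space \<Rightarrow> real) set \<Rightarrow> bool" where
  "saturation_property X \<longleftrightarrow>
     (\<forall>E\<in>sets lebesgue. emeasure lebesgue E > 0 \<longrightarrow>
        (\<exists>F\<in>sets lebesgue. F \<subseteq> E \<and> emeasure lebesgue F > 0 \<and> indicator F \<in> X))"

definition quasi_BFS :: "('a::euclidean_space \<Rightarrow> real) set \<Rightarrow> (('a \<Rightarrow> real) \<Rightarrow> real) \<Rightarrow> bool" where
  "quasi_BFS X N \<longleftrightarrow> quasi_normed_space X N \<and> complete_qn X N \<and> ideal_property X N \<and> saturation_property X"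

definition BFS :: "('a::euclidean_space \<Rightarrow> real) set \<Rightarrow> (('a \<Rightarrow> real) \<Rightarrow> real) \<Rightarrow> bool" where
  "BFS X N \<longleftrightarrow> quasi_BFS X N \<and> (\<forall>f\<in>X. \<forall>g\<in>X. N (\<lambda>x. f x + g x) \<le> N f + N g)"

definition kothe :: "('a::euclidean_space \<Rightarrow> real) set \<Rightarrow> ('a \<Rightarrow> real) set" where
  "kothe X = {g \<in> borel_measurable lebesgue. \<forall>f\<in>X. integrable lebesgue (\<lambda>x. f x * g x)}"

definition kothe_norm :: "('a::euclidean_space \<Rightarrow> real) set \<Rightarrow> (('a \<Rightarrow> real) \<Rightarrow> real) \<Rightarrow> ('a \<Rightarrow> real) \<Rightarrow> real" where
  "kothe_norm X N g = Sup ((\<lambda>f. \<integral>x. \<bar>f x * g x\<bar> \<partial>lebesgue) ` {f \<in> X. N f = 1})"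

definition fatou_property :: "('a::euclidean_space \<Rightarrow> real) set \<Rightarrow> (('a \<Rightarrow> real) \<Rightarrow> real) \<Rightarrow> bool" where
  "fatou_property X N \<longleftrightarrow>
     (\<forall>u f. (\<forall>n. u n \<in> X) \<and> f \<in> borel_measurable lebesgue \<and>
        (AE x in lebesgue. (\<forall>n. 0 \<le> u n x \<and> u n x \<le> u (Suc n) x) \<and> (\<lambda>n. u n x) \<longlonglongrightarrow> f x) \<and>
        bounded (range (\<lambda>n. N (u n)))
        \<longrightarrow> f \<in> X \<and> N f = (SUP n. N (u n)))"

definition A_ratios :: "('a::euclidean_space \<Rightarrow> real) set \<Rightarrow> (('a \<Rightarrow> real) \<Rightarrow> real) \<Rightarrow> real set" where
  "A_ratios X N = {N (indicator Q) * kothe_norm X N (indicator Q) / measure lebesgue Q | Q. cube Q}"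

definition in_A :: "('a::euclidean_space \<Rightarrow> real) set \<Rightarrow> (('a \<Rightarrow> real) \<Rightarrow> real) \<Rightarrow> bool" where
  "in_A X N \<longleftrightarrow> (\<forall>Q. cube Q \<longrightarrow> indicator Q \<in> X \<and> indicator Q \<in> kothe X) \<and> bdd_above (A_ratios X N)"

definition A_const :: "('a::euclidean_space \<Rightarrow> real) set \<Rightarrow> (('a \<Rightarrow> real) \<Rightarrow> real) \<Rightarrow> real" where
  "A_const X N = Sup (A_ratios X N)"

text \<open>Averaging operators, valued in [0,\<infinity>] (the average of |f| over Q may be infinite).\<close>
definition avg :: "'a::euclidean_space set \<Rightarrow> ('a \<Rightarrow> real) \<Rightarrow> ennreal" where
  "avg Q f = (\<integral>\<^sup>+x\<in>Q. ennreal \<bar>f x\<bar> \<partial>lebesgue) / emeasure lebesgue Q"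

definition avg_op :: "'a::euclidean_space set set \<Rightarrow> ('a \<Rightarrow> real) \<Rightarrow> 'a \<Rightarrow> ennreal" where
  "avg_op P f x = (\<Sum>\<^sub>\<infinity>Q\<in>P. avg Q f * indicator Q x)"

definition avg_bound :: "('a::euclidean_space set set \<Rightarrow> bool) \<Rightarrow> ('a \<Rightarrow> real) set \<Rightarrow> (('a \<Rightarrow> real) \<Rightarrow> real) \<Rightarrow> real \<Rightarrow> bool" where
  "avg_bound adm X N C \<longleftrightarrow>
     (\<forall>P. adm P \<longrightarrow> (\<forall>f\<in>X. (AE x in lebesgue. avg_op P f x < \<infinity>) \<and>
        (\<lambda>x. enn2real (avg_op P f x)) \<in> X \<and> N (\<lambda>x. enn2real (avg_op P f x)) \<le> C * N f))"

definition disjoint_cubes :: "'a::euclidean_space set set \<Rightarrow> bool" where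
  "disjoint_cubes P \<longleftrightarrow> P \<subseteq> Collect cube \<and> pairwise disjnt P"

definition sparse :: "'a::euclidean_space set set \<Rightarrow> bool" where
  "sparse P \<longleftrightarrow> P \<subseteq> Collect cube \<and>
     (\<exists>E. (\<forall>Q\<in>P. E Q \<in> sets lebesgue \<and> E Q \<subseteq> Q \<and> measure lebesgue (E Q) \<ge> measure lebesgue Q / 2)
          \<and> disjoint_family_on E P)"

definition in_A_strong :: "('a::euclidean_space \<Rightarrow> real) set \<Rightarrow> (('a \<Rightarrow> real) \<Rightarrow> real) \<Rightarrow> bool" where
  "in_A_strong X N \<longleftrightarrow> (\<exists>C. avg_bound disjoint_cubes X N C)"

definition A_strong_const :: "('a::euclidean_space \<Rightarrow> real) set \<Rightarrow> (('a \<Rightarrow> real) \<Rightarrow> real) \<Rightarrow> real" where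
  "A_strong_const X N = Inf {C. 0 \<le> C \<and> avg_bound disjoint_cubes X N C}"

definition in_A_sparse :: "('a::euclidean_space \<Rightarrow> real) set \<Rightarrow> (('a \<Rightarrow> real) \<Rightarrow> real) \<Rightarrow> bool" where
  "in_A_sparse X N \<longleftrightarrow> (\<exists>C. avg_bound sparse X N C)"

definition A_sparse_const :: "('a::euclidean_space \<Rightarrow> real) set \<Rightarrow> (('a \<Rightarrow> real) \<Rightarrow> real) \<Rightarrow> real" where
  "A_sparse_const X N = Inf {C. 0 \<le> C \<and> avg_bound sparse X N C}"

end

(*
  The Koethe dual X' is normed by duality, and the Riesz--Fischer argument (a geometric series
  tested against X by monotone convergence) makes it complete for any quasi-Banach function
  space X; so X' is a Banach function space as soon as it is saturated, which follows from
  indicators of cubes lying in X'. Under A these are given; under A_strong or A_sparse they come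
  from the finiteness of the averages over a single cube. The averaging operators are symmetric,
  int (A_P f) |g| = int (A_P g) |f|, so any bound for A_P on X is also one on X'; and
  ||1_Q||_X'' <= ||1_Q||_X gives [X']_A <= [X]_A.

  The converse and the equality of the constants follow from the Lorentz--Luxemburg theorem
  X'' = X (isometrically) for Banach function spaces with the Fatou property. Instead of
  Hahn--Banach, a bounded f with support of finite measure outside the unit ball of X is
  separated from it by its L^2 projection onto the convex part of the unit ball lying in L^2,
  which exists because the Fatou property makes that part closed under a.e. limits; general f
  are reached by truncation and the Fatou property once more.
*)
theory Submission
  imports Defs
begin

section \<open>Quasi-Banach ideal spaces\<close>

locale quasi_banach_ideal_space =
  fixes X :: "('a::euclidean_space \<Rightarrow> real) set" and N :: "('a \<Rightarrow> real) \<Rightarrow> real"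
  assumes quasi_normed: "quasi_normed_space X N"
    and complete: "complete_qn X N"
    and ideal: "ideal_property X N"
begin

lemma measurable: "f \<in> X \<Longrightarrow> f \<in> borel_measurable lebesgue"
  and zero_mem: "(\<lambda>x. 0) \<in> X"
  and add_mem: "f \<in> X \<Longrightarrow> g \<in> X \<Longrightarrow> (\<lambda>x. f x + g x) \<in> X"
  and scale_mem: "f \<in> X \<Longrightarrow> (\<lambda>x. c * f x) \<in> X"
  and norm_nonneg: "f \<in> X \<Longrightarrow> 0 \<le> N f"
  and norm_eq_0_iff: "f \<in> X \<Longrightarrow> N f = 0 \<longleftrightarrow> (AE x in lebesgue. f x = 0)"
  and norm_scale: "f \<in> X \<Longrightarrow> N (\<lambda>x. c * f x) = \<bar>c\<bar> * N f"
  using quasi_normed unfolding quasi_normed_space_def by blast+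

lemma quasi_triangle:
  obtains K where "K \<ge> 1" "\<And>f g. f \<in> X \<Longrightarrow> g \<in> X \<Longrightarrow> N (\<lambda>x. f x + g x) \<le> K * (N f + N g)"
  using quasi_normed unfolding quasi_normed_space_def by blast

lemma ideal_mem:
  assumes "f \<in> X" "g \<in> borel_measurable lebesgue" "AE x in lebesgue. \<bar>g x\<bar> \<le> \<bar>f x\<bar>"
  shows "g \<in> X" and "N g \<le> N f"
  using ideal assms unfolding ideal_property_def by blast+

lemma norm_zero: "N (\<lambda>x. 0) = 0"
  using norm_eq_0_iff[OF zero_mem] by simp

lemma diff_mem: "f \<in> X \<Longrightarrow> g \<in> X \<Longrightarrow> (\<lambda>x. f x - g x) \<in> X"
  using add_mem[of f "\<lambda>x. (-1) * g x"] scale_mem[of g "-1"] by simp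

lemma norm_diff_commute:
  assumes "f \<in> X" "g \<in> X"
  shows "N (\<lambda>x. f x - g x) = N (\<lambda>x. g x - f x)"
  using norm_scale[OF diff_mem[OF assms(2,1)], of "-1"] by simp

lemma sum_mem: "finite S \<Longrightarrow> (\<And>j. j \<in> S \<Longrightarrow> a j \<in> X) \<Longrightarrow> (\<lambda>x. \<Sum>j\<in>S. a j x) \<in> X"
proof (induction S rule: finite_induct)
  case (insert j S)
  have "(\<lambda>x. a j x + (\<Sum>j\<in>S. a j x)) \<in> X" by (intro add_mem) (use insert in auto)
  then show ?case using insert.hyps by simp
qed (simp add: zero_mem)

lemma
  assumes f: "f \<in> X"
  shows abs_mem: "(\<lambda>x. \<bar>f x\<bar>) \<in> X" and norm_abs: "N (\<lambda>x. \<bar>f x\<bar>) = N f"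
proof -
  have fm: "f \<in> borel_measurable lebesgue" and fm': "(\<lambda>x. \<bar>f x\<bar>) \<in> borel_measurable lebesgue"
    using measurable[OF f] by auto
  show abs: "(\<lambda>x. \<bar>f x\<bar>) \<in> X" by (rule ideal_mem(1)[OF f fm']) simp
  have "N (\<lambda>x. \<bar>f x\<bar>) \<le> N f" by (rule ideal_mem(2)[OF f fm']) simp
  moreover have "N f \<le> N (\<lambda>x. \<bar>f x\<bar>)" by (rule ideal_mem(2)[OF abs fm]) simp
  ultimately show "N (\<lambda>x. \<bar>f x\<bar>) = N f" by simp
qed

lemma AE_le_of_increasing_norm_limit:
  assumes s: "\<And>k. s k \<in> X" "\<And>k x. s k x \<le> s (Suc k) x"
    and f: "f \<in> X" "(\<lambda>k. N (\<lambda>x. s k x - f x)) \<longlonglongrightarrow> 0"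
  shows "AE x in lebesgue. s m x \<le> f x"
proof -
  define h where "h = (\<lambda>x. max 0 (s m x - f x))"
  have hm: "h \<in> borel_measurable lebesgue"
    unfolding h_def using measurable[OF s(1)] measurable[OF f(1)] by measurable
  have "AE x in lebesgue. \<bar>h x\<bar> \<le> \<bar>s m x - f x\<bar>" unfolding h_def by auto
  then have hX: "h \<in> X" using ideal_mem(1)[OF diff_mem[OF s(1) f(1)] hm] by blast
  have "N h \<le> N (\<lambda>x. s k x - f x)" if "m \<le> k" for k
  proof -
    have "AE x in lebesgue. \<bar>h x\<bar> \<le> \<bar>s k x - f x\<bar>"
    proof (rule AE_I2)
      fix x
      have "s m x \<le> s k x" using lift_Suc_mono_le[of "\<lambda>k. s k x", OF s(2) that] .
      then show "\<bar>h x\<bar> \<le> \<bar>s k x - f x\<bar>" unfolding h_def by auto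
    qed
    then show ?thesis using ideal_mem(2)[OF diff_mem[OF s(1) f(1)] hm] by blast
  qed
  then have "N h \<le> 0"
    by (intro tendsto_lowerbound[OF f(2)] eventually_sequentiallyI[of m]) auto
  then have "AE x in lebesgue. h x = 0" using norm_nonneg[OF hX] norm_eq_0_iff[OF hX] by simp
  then show ?thesis unfolding h_def by (auto elim!: eventually_mono simp: max_def split: if_splits)
qed

text \<open>The weights \<open>(2K)\<^sup>-\<^sup>j\<close> beat the powers of the constant \<open>K\<close> accumulated by the nested
  quasi-triangle inequalities.\<close>
lemma norm_block_sum_le:
  assumes K: "K \<ge> 1" "\<And>f g. f \<in> X \<Longrightarrow> g \<in> X \<Longrightarrow> N (\<lambda>x. f x + g x) \<le> K * (N f + N g)"
    and a: "\<And>j. a j \<in> X" "\<And>j. N (a j) \<le> inverse ((2 * K) ^ j)"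
  shows "N (\<lambda>x. \<Sum>j\<in>{k..<k+n}. a j x) \<le> 2 * K * inverse ((2 * K) ^ k)"
proof (induction n arbitrary: k)
  case 0
  then show ?case using norm_zero K by simp
next
  case (Suc n)
  have split: "(\<lambda>x. \<Sum>j\<in>{k..<k+Suc n}. a j x) = (\<lambda>x. a k x + (\<Sum>j\<in>{Suc k..<Suc k+n}. a j x))"
    by (rule ext, subst sum.atLeast_Suc_lessThan) auto
  have "N (\<lambda>x. \<Sum>j\<in>{k..<k+Suc n}. a j x) \<le> K * (N (a k) + N (\<lambda>x. \<Sum>j\<in>{Suc k..<Suc k+n}. a j x))"
    unfolding split by (intro K(2) a sum_mem) auto
  also have "\<dots> \<le> K * (inverse ((2 * K) ^ k) + 2 * K * inverse ((2 * K) ^ Suc k))"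
    using Suc.IH[of "Suc k"] a(2)[of k] K by (intro mult_left_mono add_mono) auto
  also have "\<dots> = 2 * K * inverse ((2 * K) ^ k)" using K by (simp add: field_simps)
  finally show ?case .
qed

lemma nonneg_series_majorant:
  assumes K: "K \<ge> 1" "\<And>f g. f \<in> X \<Longrightarrow> g \<in> X \<Longrightarrow> N (\<lambda>x. f x + g x) \<le> K * (N f + N g)"
    and a: "\<And>j. a j \<in> X" "\<And>j x. 0 \<le> a j x" "\<And>j. N (a j) \<le> inverse ((2 * K) ^ j)"
  obtains f where "f \<in> X" "\<And>m. AE x in lebesgue. (\<Sum>j<m. a j x) \<le> f x"
proof -
  define c where "c j = 2 * K * inverse ((2 * K) ^ j)" for j :: nat
  have cmono: "c k \<le> c M" if "M \<le> k" for k M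
    unfolding c_def using K that by (intro mult_left_mono le_imp_inverse_le power_increasing) auto
  define s where "s m = (\<lambda>x. \<Sum>j<m. a j x)" for m
  have sX: "s m \<in> X" for m unfolding s_def by (rule sum_mem) (auto simp: a)
  have diff_tail: "N (\<lambda>x. s m x - s k x) \<le> c M" if "M \<le> k" "k \<le> m" for m k M
  proof -
    have "(\<lambda>x. s m x - s k x) = (\<lambda>x. \<Sum>j\<in>{k..<k+(m-k)}. a j x)"
      unfolding s_def using that sum_diff_nat_ivl[of 0 k m] by (intro ext) (simp add: atLeast0LessThan)
    moreover have "N (\<lambda>x. \<Sum>j\<in>{k..<k+(m-k)}. a j x) \<le> c k"
      unfolding c_def by (rule norm_block_sum_le[OF K a(1,3)])
    ultimately show ?thesis using cmono[OF that(1)] by simp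
  qed
  have "\<exists>M. \<forall>m\<ge>M. \<forall>n\<ge>M. N (\<lambda>x. s m x - s n x) < e" if e: "e > 0" for e
  proof -
    obtain M where M: "(2 * K) ^ M > 2 * K / e" using real_arch_pow[of "2*K" "2*K/e"] K by auto
    have small: "c M < e" unfolding c_def using M e K by (simp add: field_simps)
    have "N (\<lambda>x. s m x - s n x) < e" if "M \<le> m" "M \<le> n" for m n
    proof (cases "n \<le> m")
      case True
      then show ?thesis using diff_tail[of M n m] small that by linarith
    next
      case False
      then show ?thesis using diff_tail[of M m n] norm_diff_commute[OF sX sX, of m n] small that
        by linarith
    qed
    then show ?thesis by blast
  qed
  then obtain f where f: "f \<in> X" "(\<lambda>n. N (\<lambda>x. s n x - f x)) \<longlonglongrightarrow> 0"
    using complete sX unfolding complete_qn_def by blast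
  have mono: "s k x \<le> s (Suc k) x" for k x unfolding s_def using a(2) by simp
  show ?thesis
  proof (rule that[OF f(1)])
    show "AE x in lebesgue. (\<Sum>j<m. a j x) \<le> f x" for m
      using AE_le_of_increasing_norm_limit[OF sX mono f, of m] by (simp add: s_def)
  qed
qed

lemma kothe_integral_mono:
  assumes "f \<in> X" "h \<in> X" "g \<in> kothe X" "AE x in lebesgue. \<bar>h x\<bar> \<le> \<bar>f x\<bar>"
  shows "(\<integral>x. \<bar>h x * g x\<bar> \<partial>lebesgue) \<le> (\<integral>x. \<bar>f x * g x\<bar> \<partial>lebesgue)"
proof (rule integral_mono_AE)
  show "integrable lebesgue (\<lambda>x. \<bar>h x * g x\<bar>)" "integrable lebesgue (\<lambda>x. \<bar>f x * g x\<bar>)"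
    using assms(1-3) unfolding kothe_def by auto
  show "AE x in lebesgue. \<bar>h x * g x\<bar> \<le> \<bar>f x * g x\<bar>"
    using assms(4) by eventually_elim (simp add: abs_mult mult_right_mono)
qed

lemma kothe_norm_bdd_above:
  assumes g: "g \<in> kothe X"
  shows "bdd_above ((\<lambda>f. \<integral>x. \<bar>f x * g x\<bar> \<partial>lebesgue) ` {f\<in>X. N f = 1})"
proof (rule ccontr)
  assume unbounded: "\<not> ?thesis"
  obtain K where K: "K \<ge> 1" "\<And>f g. f \<in> X \<Longrightarrow> g \<in> X \<Longrightarrow> N (\<lambda>x. f x + g x) \<le> K * (N f + N g)"
    using quasi_triangle by blast
  define w where "w j = (2 * K) ^ j" for j :: nat
  have w: "w j > 0" for j using K by (simp add: w_def)
  have "\<exists>f. f \<in> X \<and> N f = 1 \<and> (\<integral>x. \<bar>f x * g x\<bar> \<partial>lebesgue) > M" for M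
  proof -
    have "\<not> (\<forall>f\<in>{f\<in>X. N f = 1}. (\<integral>x. \<bar>f x * g x\<bar> \<partial>lebesgue) \<le> M)"
      using unbounded unfolding bdd_above_def by blast
    then show ?thesis by (auto simp: not_le)
  qed
  then have "\<forall>j. \<exists>f. f \<in> X \<and> N f = 1 \<and> (\<integral>x. \<bar>f x * g x\<bar> \<partial>lebesgue) > real j * w j" by blast
  then obtain F where "\<forall>j. F j \<in> X \<and> N (F j) = 1 \<and> (\<integral>x. \<bar>F j x * g x\<bar> \<partial>lebesgue) > real j * w j"
    by (auto dest!: choice)
  then have F: "\<And>j. F j \<in> X" "\<And>j. N (F j) = 1"
    "\<And>j. (\<integral>x. \<bar>F j x * g x\<bar> \<partial>lebesgue) > real j * w j"
    by auto
  define a where "a j = (\<lambda>x. inverse (w j) * \<bar>F j x\<bar>)" for j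
  have aX: "a j \<in> X" for j unfolding a_def by (intro scale_mem abs_mem F)
  have "N (a j) = inverse (w j)" for j
    unfolding a_def using norm_scale[OF abs_mem[OF F(1)]] norm_abs[OF F(1)] F(2) w[of j] by simp
  then have aN: "N (a j) \<le> inverse ((2 * K) ^ j)" for j by (simp add: w_def)
  have a_nonneg: "0 \<le> a j x" for j x unfolding a_def using w[of j] by simp
  obtain f where f: "f \<in> X" "\<And>m. AE x in lebesgue. (\<Sum>j<m. a j x) \<le> f x"
    using nonneg_series_majorant[OF K aX a_nonneg aN] by blast
  have big: "(\<integral>x. \<bar>f x * g x\<bar> \<partial>lebesgue) > real j" for j
  proof -
    have "AE x in lebesgue. \<bar>a j x\<bar> \<le> \<bar>f x\<bar>"
      using f(2)[of "Suc j"]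
    proof eventually_elim
      case (elim x)
      have "a j x \<le> (\<Sum>i<Suc j. a i x)" by (intro member_le_sum a_nonneg) auto
      then show ?case using elim a_nonneg[of j x] by simp
    qed
    then have "(\<integral>x. \<bar>a j x * g x\<bar> \<partial>lebesgue) \<le> (\<integral>x. \<bar>f x * g x\<bar> \<partial>lebesgue)"
      by (rule kothe_integral_mono[OF f(1) aX g])
    then have "inverse (w j) * (\<integral>x. \<bar>F j x * g x\<bar> \<partial>lebesgue) \<le> (\<integral>x. \<bar>f x * g x\<bar> \<partial>lebesgue)"
      using w[of j] by (simp add: a_def abs_mult mult.assoc)
    moreover have "real j < inverse (w j) * (\<integral>x. \<bar>F j x * g x\<bar> \<partial>lebesgue)"
      using F(3)[of j] w[of j] by (simp add: field_simps)
    ultimately show ?thesis by linarith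
  qed
  obtain j :: nat where "(\<integral>x. \<bar>f x * g x\<bar> \<partial>lebesgue) \<le> real j" using real_arch_simple by blast
  then show False using big[of j] by linarith
qed

lemma kothe_holder:
  assumes f: "f \<in> X" and g: "g \<in> kothe X"
  shows "(\<integral>x. \<bar>f x * g x\<bar> \<partial>lebesgue) \<le> N f * kothe_norm X N g"
proof (cases "N f = 0")
  case True
  then have "AE x in lebesgue. \<bar>f x * g x\<bar> = 0" using norm_eq_0_iff[OF f] by auto
  then show ?thesis using True by (simp add: integral_eq_zero_AE)
next
  case False
  then have pos: "N f > 0" using norm_nonneg[OF f] by simp
  define f' where "f' = (\<lambda>x. inverse (N f) * f x)"
  have "f' \<in> X" "N f' = 1" unfolding f'_def using scale_mem[OF f] norm_scale[OF f] pos by auto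
  then have "(\<integral>x. \<bar>f' x * g x\<bar> \<partial>lebesgue) \<le> kothe_norm X N g"
    unfolding kothe_norm_def by (intro cSup_upper kothe_norm_bdd_above[OF g]) auto
  moreover have "(\<integral>x. \<bar>f' x * g x\<bar> \<partial>lebesgue) = inverse (N f) * (\<integral>x. \<bar>f x * g x\<bar> \<partial>lebesgue)"
    unfolding f'_def using pos by (simp add: abs_mult mult.assoc)
  ultimately show ?thesis using pos by (simp add: field_simps)
qed

end

section \<open>The Koethe dual\<close>

lemma cauchy_geometric_subseq:
  fixes d :: "nat \<Rightarrow> nat \<Rightarrow> real"
  assumes "\<And>e. e > 0 \<Longrightarrow> \<exists>M. \<forall>m\<ge>M. \<forall>n\<ge>M. d m n < e"
  obtains \<phi> where "incseq \<phi>" "\<And>k n. n \<ge> \<phi> k \<Longrightarrow> d n (\<phi> k) < (1/2) ^ k"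
proof -
  have "\<forall>k. \<exists>M. \<forall>m\<ge>M. \<forall>n\<ge>M. d m n < (1/2) ^ k" using assms by simp
  then have "\<exists>M. \<forall>k. \<forall>m\<ge>M k. \<forall>n\<ge>M k. d m n < (1/2) ^ k" by (rule choice)
  then obtain M where M: "\<And>k m n. m \<ge> M k \<Longrightarrow> n \<ge> M k \<Longrightarrow> d m n < (1/2) ^ k" by blast
  define \<phi> where "\<phi> k = Max (M ` {..k})" for k
  have M_le: "M k \<le> \<phi> k" for k unfolding \<phi>_def by (intro Max_ge) auto
  show ?thesis
  proof (rule that)
    show "incseq \<phi>" unfolding \<phi>_def incseq_def by (auto intro!: Max_mono)
    show "d n (\<phi> k) < (1/2) ^ k" if "n \<ge> \<phi> k" for k n
      using M[of k n "\<phi> k"] M_le[of k] that by simp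
  qed
qed

lemma suminf_ennreal_geometric_tail:
  assumes "c \<ge> 0"
  shows "(\<Sum>i. ennreal (c * (1/2) ^ (i + j))) = ennreal (2 * c * (1/2) ^ j)"
proof -
  have "(\<lambda>i. (c * (1/2) ^ j) * (1/2::real) ^ i) sums ((c * (1/2) ^ j) * (1 / (1 - 1/2)))"
    by (intro sums_mult geometric_sums) simp
  then have "(\<lambda>i. c * (1/2::real) ^ (i + j)) sums (2 * c * (1/2) ^ j)"
    by (simp add: power_add mult_ac)
  then show ?thesis using assms by (intro suminf_ennreal_eq) auto
qed

locale quasi_banach_function_space = quasi_banach_ideal_space +
  assumes saturated: "saturation_property X"
begin

lemma saturation_obtain:
  assumes "E \<in> sets lebesgue" "emeasure lebesgue E > 0"
  obtains F where "F \<in> sets lebesgue" "F \<subseteq> E" "emeasure lebesgue F > 0" "indicator F \<in> X"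
  using saturated assms unfolding saturation_property_def by blast

lemma norm_indicator_pos:
  assumes "F \<in> sets lebesgue" "emeasure lebesgue F > 0" "indicator F \<in> X"
  shows "N (indicator F) > 0"
proof -
  have "\<not> (AE x in lebesgue. x \<notin> F)" using assms(1,2) by (simp add: AE_iff_measurable[OF _ refl])
  then have "\<not> (AE x in lebesgue. (indicator F x :: real) = 0)" by (simp add: indicator_eq_0_iff)
  then show ?thesis using norm_eq_0_iff[OF assms(3)] norm_nonneg[OF assms(3)] by simp
qed

lemma exists_norm_eq_1: "\<exists>f\<in>X. N f = 1"
proof -
  obtain F where F: "F \<in> sets lebesgue" "emeasure lebesgue F > 0" "indicator F \<in> X"
    using saturation_obtain[of UNIV] by auto
  have pos: "N (indicator F) > 0" using norm_indicator_pos[OF F] .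
  show ?thesis
  proof
    show "(\<lambda>x. inverse (N (indicator F)) * indicator F x) \<in> X" by (rule scale_mem[OF F(3)])
    show "N (\<lambda>x. inverse (N (indicator F)) * indicator F x) = 1" using norm_scale[OF F(3)] pos by simp
  qed
qed

lemma kothe_norm_nonneg:
  assumes g: "g \<in> kothe X"
  shows "0 \<le> kothe_norm X N g"
proof -
  obtain f where f: "f \<in> X" "N f = 1" using exists_norm_eq_1 by blast
  have "0 \<le> (\<integral>x. \<bar>f x * g x\<bar> \<partial>lebesgue)" by simp
  also have "\<dots> \<le> N f * kothe_norm X N g" by (rule kothe_holder[OF f(1) g])
  finally show ?thesis using f(2) by simp
qed

lemma kothe_holder_nn:
  assumes "f \<in> X" "g \<in> kothe X"
  shows "(\<integral>\<^sup>+x. ennreal \<bar>f x * g x\<bar> \<partial>lebesgue) \<le> ennreal (N f * kothe_norm X N g)"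
proof -
  have "integrable lebesgue (\<lambda>x. \<bar>f x * g x\<bar>)" using assms unfolding kothe_def by auto
  then have "(\<integral>\<^sup>+x. ennreal \<bar>f x * g x\<bar> \<partial>lebesgue) = ennreal (\<integral>x. \<bar>f x * g x\<bar> \<partial>lebesgue)"
    by (intro nn_integral_eq_integral) auto
  then show ?thesis using kothe_holder[OF assms] by (simp add: ennreal_leI)
qed

lemma
  assumes gm: "g \<in> borel_measurable lebesgue" and C: "C \<ge> 0"
    and bound: "\<And>f. f \<in> X \<Longrightarrow> (\<integral>\<^sup>+x. ennreal \<bar>f x * g x\<bar> \<partial>lebesgue) \<le> ennreal (C * N f)"
  shows kothe_memI: "g \<in> kothe X" and kothe_norm_leI: "kothe_norm X N g \<le> C"
proof -
  have int: "integrable lebesgue (\<lambda>x. f x * g x)" if f: "f \<in> X" for f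
    using measurable[OF f] gm order.strict_trans1[OF bound[OF f] ennreal_less_top]
    by (simp add: integrable_iff_bounded)
  then show "g \<in> kothe X" unfolding kothe_def using gm by blast
  show "kothe_norm X N g \<le> C" unfolding kothe_norm_def
  proof (rule cSup_least)
    show "(\<lambda>f. \<integral>x. \<bar>f x * g x\<bar> \<partial>lebesgue) ` {f \<in> X. N f = 1} \<noteq> {}" using exists_norm_eq_1 by blast
  next
    fix y assume "y \<in> (\<lambda>f. \<integral>x. \<bar>f x * g x\<bar> \<partial>lebesgue) ` {f \<in> X. N f = 1}"
    then obtain f where f: "f \<in> X" "N f = 1" and y: "y = (\<integral>x. \<bar>f x * g x\<bar> \<partial>lebesgue)" by blast
    have "ennreal y = (\<integral>\<^sup>+x. ennreal \<bar>f x * g x\<bar> \<partial>lebesgue)"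
      unfolding y using int[OF f(1)] by (intro nn_integral_eq_integral[symmetric]) auto
    also have "\<dots> \<le> ennreal C" using bound[OF f(1)] f(2) by simp
    finally show "y \<le> C" using C by (simp add: ennreal_le_iff)
  qed
qed

text \<open>Saturation: on a set where \<open>\<phi> = \<infinity>\<close> with positive measure sits an indicator in \<open>X\<close>.\<close>
lemma AE_finite_of_nn_integral_finite:
  assumes \<phi>[measurable]: "\<phi> \<in> borel_measurable lebesgue"
    and fin: "\<And>f. f \<in> X \<Longrightarrow> (\<integral>\<^sup>+x. ennreal \<bar>f x\<bar> * \<phi> x \<partial>lebesgue) < \<infinity>"
  shows "AE x in lebesgue. \<phi> x < \<infinity>"
proof -
  define B where "B = {x\<in>space lebesgue. \<phi> x = \<infinity>}"
  have Bm: "B \<in> sets lebesgue" unfolding B_def by measurable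
  have "emeasure lebesgue B = 0"
  proof (rule ccontr)
    assume "emeasure lebesgue B \<noteq> 0"
    then obtain F where F: "F \<in> sets lebesgue" "F \<subseteq> B" "emeasure lebesgue F > 0" "indicator F \<in> X"
      using saturation_obtain[OF Bm] by (auto simp: zero_less_iff_neq_zero)
    have "(\<integral>\<^sup>+x. ennreal \<bar>indicator F x\<bar> * \<phi> x \<partial>lebesgue) = (\<integral>\<^sup>+x. \<infinity> * indicator F x \<partial>lebesgue)"
      using F(2) unfolding B_def by (intro nn_integral_cong) (auto simp: indicator_def)
    also have "\<dots> = \<infinity>" using F(1,3) by (simp add: nn_integral_cmult_indicator ennreal_mult_eq_top_iff)
    finally show False using fin[OF F(4)] by simp
  qed
  then have "AE x in lebesgue. x \<notin> B" using Bm by (simp add: AE_iff_measurable[OF _ refl])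
  then show ?thesis unfolding B_def by eventually_elim (auto simp: top.not_eq_extremum)
qed

lemma
  assumes \<phi>[measurable]: "\<phi> \<in> borel_measurable lebesgue" and C: "C \<ge> 0"
    and bound: "\<And>f. f \<in> X \<Longrightarrow> (\<integral>\<^sup>+x. ennreal \<bar>f x\<bar> * \<phi> x \<partial>lebesgue) \<le> ennreal (C * N f)"
  shows AE_finite_of_nn_integral_bound: "AE x in lebesgue. \<phi> x < \<infinity>"
    and kothe_mem_enn2real: "(\<lambda>x. enn2real (\<phi> x)) \<in> kothe X"
    and kothe_norm_enn2real_le: "kothe_norm X N (\<lambda>x. enn2real (\<phi> x)) \<le> C"
proof -
  show "AE x in lebesgue. \<phi> x < \<infinity>"
    using order.strict_trans1[OF bound ennreal_less_top] by (intro AE_finite_of_nn_integral_finite[OF \<phi>]) simp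
  have "(\<integral>\<^sup>+x. ennreal \<bar>f x * enn2real (\<phi> x)\<bar> \<partial>lebesgue) \<le> ennreal (C * N f)" if f: "f \<in> X" for f
  proof -
    have "ennreal \<bar>f x * enn2real (\<phi> x)\<bar> \<le> ennreal \<bar>f x\<bar> * \<phi> x" for x
      by (cases "\<phi> x") (auto simp: abs_mult ennreal_mult)
    then show ?thesis by (intro order_trans[OF nn_integral_mono bound[OF f]])
  qed
  then show "(\<lambda>x. enn2real (\<phi> x)) \<in> kothe X" "kothe_norm X N (\<lambda>x. enn2real (\<phi> x)) \<le> C"
    using kothe_memI kothe_norm_leI C by (auto simp: measurable_compose[OF \<phi>])
qed

lemma kothe_add_mem: "g \<in> kothe X \<Longrightarrow> h \<in> kothe X \<Longrightarrow> (\<lambda>x. g x + h x) \<in> kothe X"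
  unfolding kothe_def by (auto simp: distrib_left)

lemma kothe_scale_mem: "g \<in> kothe X \<Longrightarrow> (\<lambda>x. c * g x) \<in> kothe X"
  unfolding kothe_def by (auto simp: mult.left_commute)

lemma kothe_diff_mem: "g \<in> kothe X \<Longrightarrow> h \<in> kothe X \<Longrightarrow> (\<lambda>x. g x - h x) \<in> kothe X"
  using kothe_add_mem[of g "\<lambda>x. (-1) * h x"] kothe_scale_mem[of h "-1"] by simp

lemma kothe_abs_prod_measurable:
  assumes "f \<in> X" "g \<in> kothe X"
  shows "(\<lambda>x. ennreal \<bar>f x * g x\<bar>) \<in> borel_measurable lebesgue"
  using measurable[OF assms(1)] assms(2) unfolding kothe_def by auto

lemma kothe_norm_triangle:
  assumes g: "g \<in> kothe X" and h: "h \<in> kothe X"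
  shows "kothe_norm X N (\<lambda>x. g x + h x) \<le> kothe_norm X N g + kothe_norm X N h"
proof (rule kothe_norm_leI)
  show "(\<lambda>x. g x + h x) \<in> borel_measurable lebesgue" using g h unfolding kothe_def by auto
  show "0 \<le> kothe_norm X N g + kothe_norm X N h" using kothe_norm_nonneg g h by (simp add: add_nonneg_nonneg)
next
  fix f assume f: "f \<in> X"
  have "(\<integral>\<^sup>+x. ennreal \<bar>f x * (g x + h x)\<bar> \<partial>lebesgue)
      \<le> (\<integral>\<^sup>+x. ennreal \<bar>f x * g x\<bar> + ennreal \<bar>f x * h x\<bar> \<partial>lebesgue)"
    by (intro nn_integral_mono) (simp add: distrib_left abs_triangle_ineq flip: ennreal_plus)
  also have "\<dots> = (\<integral>\<^sup>+x. ennreal \<bar>f x * g x\<bar> \<partial>lebesgue) + (\<integral>\<^sup>+x. ennreal \<bar>f x * h x\<bar> \<partial>lebesgue)"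
    using kothe_abs_prod_measurable f g h by (intro nn_integral_add) auto
  also have "\<dots> \<le> ennreal (N f * kothe_norm X N g) + ennreal (N f * kothe_norm X N h)"
    by (intro add_mono kothe_holder_nn f g h)
  also have "\<dots> = ennreal ((kothe_norm X N g + kothe_norm X N h) * N f)"
    using norm_nonneg[OF f] kothe_norm_nonneg[OF g] kothe_norm_nonneg[OF h]
    by (simp add: algebra_simps flip: ennreal_plus)
  finally show "(\<integral>\<^sup>+x. ennreal \<bar>f x * (g x + h x)\<bar> \<partial>lebesgue)
      \<le> ennreal ((kothe_norm X N g + kothe_norm X N h) * N f)" .
qed

lemma kothe_norm_scale_le:
  assumes g: "g \<in> kothe X"
  shows "kothe_norm X N (\<lambda>x. c * g x) \<le> \<bar>c\<bar> * kothe_norm X N g"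
proof (rule kothe_norm_leI)
  show "(\<lambda>x. c * g x) \<in> borel_measurable lebesgue" using g unfolding kothe_def by auto
  show "0 \<le> \<bar>c\<bar> * kothe_norm X N g" using kothe_norm_nonneg[OF g] by simp
next
  fix f assume f: "f \<in> X"
  have "(\<integral>\<^sup>+x. ennreal \<bar>f x * (c * g x)\<bar> \<partial>lebesgue) = (\<integral>\<^sup>+x. ennreal \<bar>c\<bar> * ennreal \<bar>f x * g x\<bar> \<partial>lebesgue)"
    by (intro nn_integral_cong) (auto simp: abs_mult ennreal_mult[symmetric] mult_ac)
  also have "\<dots> = ennreal \<bar>c\<bar> * (\<integral>\<^sup>+x. ennreal \<bar>f x * g x\<bar> \<partial>lebesgue)"
    using kothe_abs_prod_measurable[OF f g] by (rule nn_integral_cmult)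
  also have "\<dots> \<le> ennreal \<bar>c\<bar> * ennreal (N f * kothe_norm X N g)"
    by (intro mult_left_mono kothe_holder_nn f g) auto
  also have "\<dots> = ennreal (\<bar>c\<bar> * kothe_norm X N g * N f)"
    using norm_nonneg[OF f] kothe_norm_nonneg[OF g] by (simp add: ennreal_mult[symmetric] mult_ac)
  finally show "(\<integral>\<^sup>+x. ennreal \<bar>f x * (c * g x)\<bar> \<partial>lebesgue) \<le> ennreal (\<bar>c\<bar> * kothe_norm X N g * N f)" .
qed

lemma kothe_norm_scale:
  assumes g: "g \<in> kothe X"
  shows "kothe_norm X N (\<lambda>x. c * g x) = \<bar>c\<bar> * kothe_norm X N g"
proof (cases "c = 0")
  case True
  then show ?thesis using kothe_norm_scale_le[OF g, of 0] kothe_norm_nonneg[OF kothe_scale_mem[OF g, of 0]]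
    by simp
next
  case False
  have "(\<lambda>x. inverse c * (c * g x)) = g" using False by (intro ext) simp
  then have "kothe_norm X N g = kothe_norm X N (\<lambda>x. inverse c * (c * g x))" by simp
  also have "\<dots> \<le> \<bar>inverse c\<bar> * kothe_norm X N (\<lambda>x. c * g x)"
    by (rule kothe_norm_scale_le[OF kothe_scale_mem[OF g]])
  finally have "\<bar>c\<bar> * kothe_norm X N g \<le> kothe_norm X N (\<lambda>x. c * g x)"
    using False by (simp add: field_simps abs_inverse)
  then show ?thesis using kothe_norm_scale_le[OF g, of c] by simp
qed

lemma kothe_norm_diff_commute:
  assumes "g \<in> kothe X" "h \<in> kothe X"
  shows "kothe_norm X N (\<lambda>x. g x - h x) = kothe_norm X N (\<lambda>x. h x - g x)"
  using kothe_norm_scale[OF kothe_diff_mem[OF assms(2,1)], of "-1"] by simp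

lemma kothe_norm_eq_0_iff:
  assumes g: "g \<in> kothe X"
  shows "kothe_norm X N g = 0 \<longleftrightarrow> (AE x in lebesgue. g x = 0)"
proof
  assume "AE x in lebesgue. g x = 0"
  then have "(\<integral>\<^sup>+x. ennreal \<bar>f x * g x\<bar> \<partial>lebesgue) = 0" if "f \<in> X" for f
    using kothe_abs_prod_measurable[OF that g] by (auto intro!: nn_integral_0_iff_AE[THEN iffD2] elim!: eventually_mono)
  then have "kothe_norm X N g \<le> 0" using g unfolding kothe_def by (intro kothe_norm_leI) auto
  then show "kothe_norm X N g = 0" using kothe_norm_nonneg[OF g] by simp
next
  assume norm0: "kothe_norm X N g = 0"
  have gm[measurable]: "g \<in> borel_measurable lebesgue" using g unfolding kothe_def by auto
  have "(\<integral>\<^sup>+x. ennreal \<bar>f x\<bar> * (\<infinity> * ennreal \<bar>g x\<bar>) \<partial>lebesgue) < \<infinity>" if f: "f \<in> X" for f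
  proof -
    have "(\<integral>\<^sup>+x. ennreal \<bar>f x\<bar> * (\<infinity> * ennreal \<bar>g x\<bar>) \<partial>lebesgue) = (\<integral>\<^sup>+x. \<infinity> * ennreal \<bar>f x * g x\<bar> \<partial>lebesgue)"
      by (intro nn_integral_cong) (simp add: abs_mult ennreal_mult mult_ac)
    also have "\<dots> = \<infinity> * (\<integral>\<^sup>+x. ennreal \<bar>f x * g x\<bar> \<partial>lebesgue)"
      by (rule nn_integral_cmult[OF kothe_abs_prod_measurable[OF f g]])
    also have "(\<integral>\<^sup>+x. ennreal \<bar>f x * g x\<bar> \<partial>lebesgue) = 0"
      using kothe_holder_nn[OF f g] norm0 by simp
    finally show ?thesis by simp
  qed
  \<comment> \<open>\<open>\<infinity> * \<bar>g\<bar>\<close> is finite exactly where \<open>g\<close> vanishes\<close>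
  then have "AE x in lebesgue. \<infinity> * ennreal \<bar>g x\<bar> < \<infinity>"
    by (intro AE_finite_of_nn_integral_finite) auto
  then show "AE x in lebesgue. g x = 0" by eventually_elim (auto simp: ennreal_mult_less_top)
qed

lemma
  assumes g: "g \<in> kothe X" and hm: "h \<in> borel_measurable lebesgue"
    and le: "AE x in lebesgue. \<bar>h x\<bar> \<le> \<bar>g x\<bar>"
  shows kothe_ideal_mem: "h \<in> kothe X" and kothe_ideal_norm_le: "kothe_norm X N h \<le> kothe_norm X N g"
proof -
  have bound: "(\<integral>\<^sup>+x. ennreal \<bar>f x * h x\<bar> \<partial>lebesgue) \<le> ennreal (kothe_norm X N g * N f)"
    if f: "f \<in> X" for f
  proof -
    have "(\<integral>\<^sup>+x. ennreal \<bar>f x * h x\<bar> \<partial>lebesgue) \<le> (\<integral>\<^sup>+x. ennreal \<bar>f x * g x\<bar> \<partial>lebesgue)"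
      using le by (intro nn_integral_mono_AE) (auto simp: abs_mult intro!: mult_left_mono elim!: eventually_mono)
    then show ?thesis using kothe_holder_nn[OF f g] by (simp add: mult_ac)
  qed
  show "h \<in> kothe X" "kothe_norm X N h \<le> kothe_norm X N g"
    using kothe_memI[OF hm _ bound] kothe_norm_leI[OF hm _ bound] kothe_norm_nonneg[OF g] by auto
qed

lemma kothe_ideal: "ideal_property (kothe X) (kothe_norm X N)"
  unfolding ideal_property_def using kothe_ideal_mem kothe_ideal_norm_le by blast

lemma kothe_quasi_normed: "quasi_normed_space (kothe X) (kothe_norm X N)"
proof -
  have "(\<lambda>x. 0) \<in> kothe X" unfolding kothe_def by simp
  moreover have "kothe X \<subseteq> borel_measurable lebesgue" unfolding kothe_def by auto
  ultimately show ?thesis unfolding quasi_normed_space_def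
    using kothe_add_mem kothe_scale_mem kothe_norm_nonneg kothe_norm_eq_0_iff kothe_norm_scale
      kothe_norm_triangle by (intro conjI exI[of _ 1]) auto
qed

lemma nn_integral_geometric_tail_le:
  assumes d: "\<And>k. d k \<in> kothe X" "\<And>k. kothe_norm X N (d k) \<le> (1/2) ^ k" and f: "f \<in> X"
  shows "(\<integral>\<^sup>+x. ennreal \<bar>f x\<bar> * (\<Sum>i. ennreal \<bar>d (i + j) x\<bar>) \<partial>lebesgue) \<le> ennreal (2 * (1/2) ^ j * N f)"
proof -
  have "(\<integral>\<^sup>+x. ennreal \<bar>f x\<bar> * (\<Sum>i. ennreal \<bar>d (i + j) x\<bar>) \<partial>lebesgue)
      = (\<integral>\<^sup>+x. (\<Sum>i. ennreal \<bar>f x * d (i + j) x\<bar>) \<partial>lebesgue)"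
    by (simp add: abs_mult ennreal_mult flip: ennreal_suminf_cmult)
  also have "\<dots> = (\<Sum>i. \<integral>\<^sup>+x. ennreal \<bar>f x * d (i + j) x\<bar> \<partial>lebesgue)"
    using kothe_abs_prod_measurable[OF f d(1)] by (intro nn_integral_suminf) auto
  also have "\<dots> \<le> (\<Sum>i. ennreal (N f * (1/2) ^ (i + j)))"
  proof (intro suminf_le)
    fix i
    have "(\<integral>\<^sup>+x. ennreal \<bar>f x * d (i + j) x\<bar> \<partial>lebesgue) \<le> ennreal (N f * kothe_norm X N (d (i + j)))"
      by (rule kothe_holder_nn[OF f d(1)])
    also have "\<dots> \<le> ennreal (N f * (1/2) ^ (i + j))"
      by (intro ennreal_leI mult_left_mono d(2) norm_nonneg f)
    finally show "(\<integral>\<^sup>+x. ennreal \<bar>f x * d (i + j) x\<bar> \<partial>lebesgue) \<le> ennreal (N f * (1/2) ^ (i + j))" .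
  qed auto
  also have "\<dots> = ennreal (2 * (1/2) ^ j * N f)"
    using suminf_ennreal_geometric_tail[OF norm_nonneg[OF f]] by (simp add: mult_ac)
  finally show ?thesis .
qed

text \<open>Riesz--Fischer argument: the tails \<open>\<Sum>\<^sub>i\<^sub>\<ge>\<^sub>k \<bar>d\<^sub>i\<bar>\<close> are dominated by elements of the dual.\<close>
lemma kothe_geometric_series:
  assumes d: "\<And>k. d k \<in> kothe X" "\<And>k. kothe_norm X N (d k) \<le> (1/2) ^ k"
  shows "AE x in lebesgue. summable (\<lambda>k. d k x)"
    and "(\<lambda>x. (\<Sum>j. d j x) - (\<Sum>j<k. d j x)) \<in> kothe X"
    and "kothe_norm X N (\<lambda>x. (\<Sum>j. d j x) - (\<Sum>j<k. d j x)) \<le> 2 * (1/2) ^ k"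
proof -
  have dm[measurable]: "d k \<in> borel_measurable lebesgue" for k using d(1) unfolding kothe_def by auto
  define G where "G j x = (\<Sum>i. ennreal \<bar>d (i + j) x\<bar>)" for j x
  have Gm[measurable]: "G j \<in> borel_measurable lebesgue" for j unfolding G_def by measurable
  have Gbound: "(\<integral>\<^sup>+x. ennreal \<bar>f x\<bar> * G j x \<partial>lebesgue) \<le> ennreal (2 * (1/2) ^ j * N f)"
    if "f \<in> X" for f j
    unfolding G_def by (rule nn_integral_geometric_tail_le[OF d that])
  have G_AE: "AE x in lebesgue. G 0 x < \<infinity>"
    using AE_finite_of_nn_integral_bound[OF Gm _ Gbound[where j=0]] by simp
  have summable: "summable (\<lambda>i. \<bar>d i x\<bar>)" if "G 0 x < \<infinity>" for x
    using that unfolding G_def by (intro summable_suminf_not_top) auto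
  show "AE x in lebesgue. summable (\<lambda>k. d k x)"
    using G_AE by eventually_elim (rule summable_rabs_cancel[OF summable])
  have tail: "\<bar>(\<Sum>j. d j x) - (\<Sum>j<k. d j x)\<bar> \<le> \<bar>enn2real (G k x)\<bar>" if "G 0 x < \<infinity>" for x
  proof -
    have s: "summable (\<lambda>i. \<bar>d (i + k) x\<bar>)"
      using summable[OF that] summable_iff_shift[of "\<lambda>i. \<bar>d i x\<bar>" k] by simp
    have "(\<Sum>j. d j x) - (\<Sum>j<k. d j x) = (\<Sum>i. d (i + k) x)"
      using suminf_split_initial_segment[OF summable_rabs_cancel[OF summable[OF that]], of k] by simp
    then have "\<bar>(\<Sum>j. d j x) - (\<Sum>j<k. d j x)\<bar> \<le> (\<Sum>i. \<bar>d (i + k) x\<bar>)"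
      using summable_rabs[OF s] by simp
    moreover have "G k x = ennreal (\<Sum>i. \<bar>d (i + k) x\<bar>)"
      unfolding G_def using s by (intro suminf_ennreal2) auto
    ultimately show ?thesis by (simp add: suminf_nonneg[OF s])
  qed
  have Gk: "(\<lambda>x. enn2real (G k x)) \<in> kothe X" "kothe_norm X N (\<lambda>x. enn2real (G k x)) \<le> 2 * (1/2) ^ k"
    using kothe_mem_enn2real[OF Gm _ Gbound] kothe_norm_enn2real_le[OF Gm _ Gbound] by simp_all
  have Sm: "(\<lambda>x. (\<Sum>j. d j x) - (\<Sum>j<k. d j x)) \<in> borel_measurable lebesgue" by measurable
  have "AE x in lebesgue. \<bar>(\<Sum>j. d j x) - (\<Sum>j<k. d j x)\<bar> \<le> \<bar>enn2real (G k x)\<bar>"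
    using G_AE by eventually_elim (rule tail)
  then show "(\<lambda>x. (\<Sum>j. d j x) - (\<Sum>j<k. d j x)) \<in> kothe X"
    and "kothe_norm X N (\<lambda>x. (\<Sum>j. d j x) - (\<Sum>j<k. d j x)) \<le> 2 * (1/2) ^ k"
    using kothe_ideal_mem[OF Gk(1) Sm] kothe_ideal_norm_le[OF Gk(1) Sm] Gk(2) by auto
qed

lemma kothe_complete: "complete_qn (kothe X) (kothe_norm X N)"
  unfolding complete_qn_def
proof (intro allI impI)
  fix u :: "nat \<Rightarrow> 'a \<Rightarrow> real"
  assume "(\<forall>n. u n \<in> kothe X) \<and>
    (\<forall>e>0. \<exists>M. \<forall>m\<ge>M. \<forall>n\<ge>M. kothe_norm X N (\<lambda>x. u m x - u n x) < e)"
  then have u: "\<And>n. u n \<in> kothe X"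
    and cauchy: "\<And>e. e > 0 \<Longrightarrow> \<exists>M. \<forall>m\<ge>M. \<forall>n\<ge>M. kothe_norm X N (\<lambda>x. u m x - u n x) < e"
    by auto
  obtain \<phi> where \<phi>: "incseq \<phi>" "\<And>k n. n \<ge> \<phi> k \<Longrightarrow> kothe_norm X N (\<lambda>x. u n x - u (\<phi> k) x) < (1/2) ^ k"
    using cauchy_geometric_subseq[of "\<lambda>m n. kothe_norm X N (\<lambda>x. u m x - u n x)", OF cauchy] by blast
  define d where "d k = (\<lambda>x. u (\<phi> (Suc k)) x - u (\<phi> k) x)" for k
  have d: "d k \<in> kothe X" "kothe_norm X N (d k) \<le> (1/2) ^ k" for k
    unfolding d_def using kothe_diff_mem[OF u u] \<phi>(2)[OF incseqD[OF \<phi>(1)], of k "Suc k"] by auto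
  define g where "g x = u (\<phi> 0) x + (\<Sum>k. d k x)" for x
  have "g x - u (\<phi> k) x = (\<Sum>j. d j x) - (\<Sum>j<k. d j x)" for k x
    using sum_lessThan_telescope[of "\<lambda>j. u (\<phi> j) x" k] unfolding g_def d_def by simp
  then have gk: "(\<lambda>x. g x - u (\<phi> k) x) \<in> kothe X" "kothe_norm X N (\<lambda>x. g x - u (\<phi> k) x) \<le> 2 * (1/2) ^ k"
    for k using kothe_geometric_series(2,3)[OF d, of k] by simp_all
  have "(\<lambda>x. (g x - u (\<phi> 0) x) + u (\<phi> 0) x) \<in> kothe X" by (intro kothe_add_mem gk u)
  then have g: "g \<in> kothe X" by simp
  have bound: "kothe_norm X N (\<lambda>x. u n x - g x) \<le> 3 * (1/2) ^ k" if n: "n \<ge> \<phi> k" for n k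
  proof -
    have "kothe_norm X N (\<lambda>x. u n x - g x)
        \<le> kothe_norm X N (\<lambda>x. u n x - u (\<phi> k) x) + kothe_norm X N (\<lambda>x. u (\<phi> k) x - g x)"
      using kothe_norm_triangle[OF kothe_diff_mem[OF u u] kothe_diff_mem[OF u g], of n "\<phi> k" "\<phi> k"] by simp
    also have "\<dots> \<le> (1/2) ^ k + 2 * (1/2) ^ k"
      using \<phi>(2)[OF n] gk(2)[of k] kothe_norm_diff_commute[OF g u, of "\<phi> k"] by simp
    finally show ?thesis by simp
  qed
  have "(\<lambda>n. kothe_norm X N (\<lambda>x. u n x - g x)) \<longlonglongrightarrow> 0"
  proof (rule LIMSEQ_I)
    fix r :: real assume "0 < r"
    then obtain k where k: "(1/2::real) ^ k < r / 3" using real_arch_pow_inv[of "r/3" "1/2"] by auto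
    have "norm (kothe_norm X N (\<lambda>x. u n x - g x) - 0) < r" if "n \<ge> \<phi> k" for n
      using bound[OF that] kothe_norm_nonneg[OF kothe_diff_mem[OF u g]] k by simp
    then show "\<exists>n0. \<forall>n\<ge>n0. norm (kothe_norm X N (\<lambda>x. u n x - g x) - 0) < r" by blast
  qed
  then show "\<exists>g\<in>kothe X. (\<lambda>n. kothe_norm X N (\<lambda>x. u n x - g x)) \<longlonglongrightarrow> 0" using g by blast
qed

end

section \<open>Cubes\<close>

lemma
  assumes "cube (Q :: 'a::euclidean_space set)"
  shows cube_sets_lebesgue: "Q \<in> sets lebesgue"
    and emeasure_cube_pos: "emeasure lebesgue Q > 0"
    and emeasure_cube_finite: "emeasure lebesgue Q < \<infinity>"
proof -
  obtain a r where r: "r > 0" and Q: "Q = {x. \<forall>i\<in>Basis. a \<bullet> i \<le> x \<bullet> i \<and> x \<bullet> i < a \<bullet> i + r}"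
    using assms unfolding cube_def by blast
  have "{x\<in>space lborel. \<forall>i\<in>Basis. a \<bullet> i \<le> x \<bullet> i \<and> x \<bullet> i < a \<bullet> i + r} \<in> sets lborel"
    by measurable
  then have QB: "Q \<in> sets lborel" unfolding Q by simp
  then show "Q \<in> sets lebesgue" by (simp add: sets_completionI_sets)
  have eq: "emeasure lebesgue Q = emeasure lborel Q" using QB by (simp add: emeasure_completion main_part_sets)
  define b where "b = a + r *\<^sub>R One"
  have "box a b \<subseteq> Q" unfolding Q b_def by (fastforce simp: mem_box inner_simps intro: less_imp_le)
  then have "emeasure lborel (box a b) \<le> emeasure lborel Q" using QB by (intro emeasure_mono) auto
  moreover have "emeasure lborel (box a b) = ennreal (r ^ DIM('a))"
    unfolding b_def using r by (subst emeasure_lborel_box) (auto simp: inner_simps ennreal_power)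
  ultimately have "ennreal (r ^ DIM('a)) \<le> emeasure lebesgue Q" using eq by simp
  moreover have "0 < ennreal (r ^ DIM('a))" using r by simp
  ultimately show "emeasure lebesgue Q > 0" by (rule order.strict_trans2[rotated])
  have "Q \<subseteq> cbox a b" unfolding Q b_def by (auto simp: mem_box inner_simps less_imp_le)
  then have "emeasure lborel Q \<le> emeasure lborel (cbox a b)" by (intro emeasure_mono) auto
  then show "emeasure lebesgue Q < \<infinity>" using eq emeasure_lborel_cbox_finite[of a b] by simp
qed

lemma measure_cube_pos: "cube Q \<Longrightarrow> measure lebesgue Q > 0"
  using emeasure_cube_pos[of Q] emeasure_cube_finite[of Q] by (simp add: measure_def enn2real_positive_iff)

lemma exists_cube_superset_ball:
  assumes "r > 0"
  obtains Q :: "'a::euclidean_space set" where "cube Q" "ball 0 r \<subseteq> Q"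
proof
  define a :: 'a where "a = (- r) *\<^sub>R One"
  show "cube {x. \<forall>i\<in>Basis. a \<bullet> i \<le> x \<bullet> i \<and> x \<bullet> i < a \<bullet> i + 2 * r}"
    unfolding cube_def using assms by (intro exI[of _ a] exI[of _ "2 * r"]) auto
  show "ball 0 r \<subseteq> {x. \<forall>i\<in>Basis. a \<bullet> i \<le> x \<bullet> i \<and> x \<bullet> i < a \<bullet> i + 2 * r}"
  proof
    fix x :: 'a assume "x \<in> ball 0 r"
    then have "\<bar>x \<bullet> i\<bar> < r" if "i \<in> Basis" for i using Basis_le_norm[OF that, of x] by simp
    then show "x \<in> {x. \<forall>i\<in>Basis. a \<bullet> i \<le> x \<bullet> i \<and> x \<bullet> i < a \<bullet> i + 2 * r}"
      unfolding a_def by (force simp: inner_simps abs_less_iff)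
  qed
qed

lemma exists_cube: "\<exists>Q :: 'a::euclidean_space set. cube Q"
  using exists_cube_superset_ball[OF zero_less_one] by blast

lemma exists_emeasure_inter_ball_pos:
  assumes E: "E \<in> sets lebesgue" "emeasure lebesgue E > 0"
  obtains n :: nat where "emeasure lebesgue (E \<inter> ball (0::'a::euclidean_space) (real n)) > 0"
proof (rule ccontr)
  assume "\<not> thesis"
  with that have "emeasure lebesgue (E \<inter> ball 0 (real n)) = 0" for n by (auto simp: zero_less_iff_neq_zero)
  then have "emeasure lebesgue (\<Union>n. E \<inter> ball (0::'a) (real n)) = 0"
    using E(1) by (intro emeasure_UN_eq_0) auto
  moreover have "x \<in> (\<Union>n. E \<inter> ball (0::'a) (real n))" if "x \<in> E" for x
  proof -
    obtain n :: nat where "norm x < real n" using reals_Archimedean2 by blast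
    then show ?thesis using that by auto
  qed
  then have "(\<Union>n. E \<inter> ball (0::'a) (real n)) = E" by blast
  ultimately show False using E(2) by simp
qed

lemma exists_cube_inter_emeasure_pos:
  assumes E: "E \<in> sets lebesgue" "emeasure lebesgue E > 0"
  obtains Q :: "'a::euclidean_space set" where "cube Q" "emeasure lebesgue (E \<inter> Q) > 0"
proof -
  obtain n where n: "emeasure lebesgue (E \<inter> ball (0::'a) (real n)) > 0"
    using exists_emeasure_inter_ball_pos[OF E] .
  then have "real n > 0" by (intro of_nat_0_less_iff[THEN iffD2] Nat.gr0I) simp
  then obtain Q :: "'a set" where Q: "cube Q" "ball 0 (real n) \<subseteq> Q"
    using exists_cube_superset_ball by blast
  have "emeasure lebesgue (E \<inter> ball 0 (real n)) \<le> emeasure lebesgue (E \<inter> Q)"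
    using Q E(1) cube_sets_lebesgue[OF Q(1)] by (intro emeasure_mono) auto
  then show ?thesis using that[OF Q(1)] n by simp
qed

text \<open>Test the family on the balls \<open>B\<^sub>n\<close>: the measures of the \<open>E Q \<inter> B\<^sub>n\<close> are summable, so only
  countably many of them are nonzero.\<close>
lemma countable_disjoint_family_emeasure_pos:
  fixes E :: "'b \<Rightarrow> 'a::euclidean_space set"
  assumes disj: "disjoint_family_on E P" and E: "\<And>Q. Q \<in> P \<Longrightarrow> E Q \<in> sets lebesgue"
    and pos: "\<And>Q. Q \<in> P \<Longrightarrow> emeasure lebesgue (E Q) > 0"
  shows "countable P"
proof -
  define B where "B n = ball (0::'a) (real n)" for n :: nat
  have B: "B n \<in> sets lebesgue" "emeasure lebesgue (B n) < \<infinity>" for n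
    unfolding B_def using emeasure_bounded_finite[of "ball (0::'a) (real n)"] by (auto simp: top.not_eq_extremum)
  have fin: "emeasure lebesgue (E Q \<inter> B n) < \<infinity>" if "Q \<in> P" for Q n
    using B[of n] E[OF that] by (meson emeasure_mono inf_le2 le_less_trans)
  have "(\<lambda>Q. measure lebesgue (E Q \<inter> B n)) summable_on P" for n
  proof (rule nonneg_bdd_above_summable_on)
    show "bdd_above (sum (\<lambda>Q. measure lebesgue (E Q \<inter> B n)) ` {F. F \<subseteq> P \<and> finite F})"
    proof (rule bdd_aboveI2)
      fix F assume F: "F \<in> {F. F \<subseteq> P \<and> finite F}"
      have "(\<Sum>Q\<in>F. measure lebesgue (E Q \<inter> B n)) = measure lebesgue (\<Union>Q\<in>F. E Q \<inter> B n)"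
      proof (intro measure_finite_Union[symmetric])
        show "finite F" using F by simp
        show "(\<lambda>Q. E Q \<inter> B n) ` F \<subseteq> sets lebesgue" using F E B by auto
        show "disjoint_family_on (\<lambda>Q. E Q \<inter> B n) F" using F disj unfolding disjoint_family_on_def by blast
        show "emeasure lebesgue (E Q \<inter> B n) \<noteq> \<infinity>" if "Q \<in> F" for Q
          using F that by (intro less_imp_neq fin) auto
      qed
      also have "\<dots> \<le> measure lebesgue (B n)"
        using F E B by (intro measure_mono_fmeasurable sets.finite_UN) (auto simp: fmeasurable_def)
      finally show "(\<Sum>Q\<in>F. measure lebesgue (E Q \<inter> B n)) \<le> measure lebesgue (B n)" .
    qed
  qed simp
  then have "countable {Q\<in>P. measure lebesgue (E Q \<inter> B n) \<noteq> 0}" for n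
    by (rule summable_countable_real)
  then have "countable (\<Union>n. {Q\<in>P. measure lebesgue (E Q \<inter> B n) \<noteq> 0})" by (intro countable_UN) auto
  moreover have "P \<subseteq> (\<Union>n. {Q\<in>P. measure lebesgue (E Q \<inter> B n) \<noteq> 0})"
  proof
    fix Q assume Q: "Q \<in> P"
    obtain n where n: "emeasure lebesgue (E Q \<inter> B n) > 0"
      using exists_emeasure_inter_ball_pos[OF E[OF Q] pos[OF Q]] unfolding B_def .
    then have "measure lebesgue (E Q \<inter> B n) \<noteq> 0" using fin[OF Q, of n]
      by (simp add: measure_def enn2real_eq_0_iff less_imp_neq)
    then show "Q \<in> (\<Union>n. {Q\<in>P. measure lebesgue (E Q \<inter> B n) \<noteq> 0})" using Q by blast
  qed
  ultimately show ?thesis by (rule countable_subset[rotated])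
qed

context quasi_banach_function_space
begin

lemma kothe_saturation_of_cubes:
  assumes cubes: "\<And>Q. cube Q \<Longrightarrow> indicator Q \<in> kothe X"
  shows "saturation_property (kothe X)"
  unfolding saturation_property_def
proof (intro ballI impI)
  fix E :: "'a set" assume E: "E \<in> sets lebesgue" "emeasure lebesgue E > 0"
  obtain Q where Q: "cube Q" "emeasure lebesgue (E \<inter> Q) > 0" using exists_cube_inter_emeasure_pos[OF E] .
  have EQ: "E \<inter> Q \<in> sets lebesgue" using E(1) cube_sets_lebesgue[OF Q(1)] by auto
  have "indicator (E \<inter> Q) \<in> kothe X"
    using EQ by (intro kothe_ideal_mem[OF cubes[OF Q(1)]]) (auto simp: indicator_def)
  then show "\<exists>F\<in>sets lebesgue. F \<subseteq> E \<and> 0 < emeasure lebesgue F \<and> indicator F \<in> kothe X"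
    using EQ Q(2) by blast
qed

lemma kothe_BFS_of_saturation:
  assumes "saturation_property (kothe X)"
  shows "BFS (kothe X) (kothe_norm X N)"
  unfolding BFS_def quasi_BFS_def
  using assms kothe_quasi_normed kothe_complete kothe_ideal kothe_norm_triangle by blast

end

section \<open>Averaging operators\<close>

lemma countable_infsum_ennreal_cases:
  assumes "countable P"
  obtains "finite P"
    | e where "bij_betw e (UNIV :: nat set) P" "\<And>h. infsum (h :: _ \<Rightarrow> ennreal) P = (\<Sum>n. h (e n))"
proof (cases "finite P")
  case False
  define e where "e = from_nat_into P"
  have e: "bij_betw e UNIV P" unfolding e_def using bij_betw_from_nat_into[OF assms False] .
  have "infsum h P = (\<Sum>n. h (e n))" for h :: "_ \<Rightarrow> ennreal"
  proof -
    have "((\<lambda>n. h (e n)) has_sum infsum (\<lambda>n. h (e n)) UNIV) UNIV"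
      by (rule has_sum_infsum[OF nonneg_summable_on_complete]) simp
    then have "infsum (\<lambda>n. h (e n)) UNIV = (\<Sum>n. h (e n))" by (intro sums_unique has_sum_imp_sums)
    then show ?thesis using infsum_reindex_bij_betw[OF e, of h] by simp
  qed
  then show ?thesis using that(2) e by blast
qed (use that(1) in blast)

lemma infsum_ennreal_mult_right:
  assumes "countable P"
  shows "(\<Sum>\<^sub>\<infinity>i\<in>P. (F i :: ennreal)) * c = (\<Sum>\<^sub>\<infinity>i\<in>P. F i * c)"
  using assms by (cases rule: countable_infsum_ennreal_cases) (simp_all add: sum_distrib_right)

lemma borel_measurable_infsum_ennreal:
  assumes "countable P" "\<And>i. i \<in> P \<Longrightarrow> (F i :: 'a \<Rightarrow> ennreal) \<in> borel_measurable M"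
  shows "(\<lambda>x. \<Sum>\<^sub>\<infinity>i\<in>P. F i x) \<in> borel_measurable M"
  using assms(1)
proof (cases rule: countable_infsum_ennreal_cases)
  case (2 e)
  then show ?thesis using assms(2) bij_betwE[OF 2(1)] by (simp add: borel_measurable_suminf_order)
qed (use assms(2) in simp)

lemma nn_integral_infsum:
  assumes "countable P" "\<And>i. i \<in> P \<Longrightarrow> (F i :: 'a \<Rightarrow> ennreal) \<in> borel_measurable M"
  shows "(\<integral>\<^sup>+x. (\<Sum>\<^sub>\<infinity>i\<in>P. F i x) \<partial>M) = (\<Sum>\<^sub>\<infinity>i\<in>P. (\<integral>\<^sup>+x. F i x \<partial>M))"
  using assms(1)
proof (cases rule: countable_infsum_ennreal_cases)
  case (2 e)
  then show ?thesis using assms(2) bij_betwE[OF 2(1)] by (simp add: nn_integral_suminf)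
qed (use assms(2) in \<open>simp add: nn_integral_sum\<close>)

lemma AE_ex_in_emeasure_pos:
  assumes "AE x in M. p x" "F \<in> sets M" "emeasure M F > 0"
  shows "\<exists>x\<in>F. p x"
proof (rule ccontr)
  assume "\<not> ?thesis"
  then have "AE x in M. x \<notin> F" using assms(1) by (auto elim: eventually_mono)
  then have "F \<in> null_sets M" using assms(2) by (simp add: AE_iff_null_sets)
  then show False using assms(3) by auto
qed

text \<open>What the duality argument needs of the admissible collections of cubes (pairwise disjoint
  ones for \<open>A\<^sub>s\<^sub>t\<^sub>r\<^sub>o\<^sub>n\<^sub>g\<close>, sparse ones for \<open>A\<^sub>s\<^sub>p\<^sub>a\<^sub>r\<^sub>s\<^sub>e\<close>).\<close>
definition countable_cube_class :: "('a::euclidean_space set set \<Rightarrow> bool) \<Rightarrow> bool" where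
  "countable_cube_class adm \<longleftrightarrow>
     (\<forall>P. adm P \<longrightarrow> countable P \<and> P \<subseteq> Collect cube) \<and> (\<forall>Q. cube Q \<longrightarrow> adm {Q})"

lemma countable_cube_classD:
  assumes "countable_cube_class adm"
  shows "adm P \<Longrightarrow> countable P" "adm P \<Longrightarrow> P \<subseteq> Collect cube" "cube Q \<Longrightarrow> adm {Q}"
  using assms unfolding countable_cube_class_def by blast+

lemma countable_cube_class_disjoint_cubes: "countable_cube_class disjoint_cubes"
  unfolding countable_cube_class_def
proof (intro conjI allI impI)
  fix P :: "'a set set" assume P: "disjoint_cubes P"
  then show "P \<subseteq> Collect cube" unfolding disjoint_cubes_def by blast
  show "countable P"
    using P cube_sets_lebesgue emeasure_cube_pos
    by (intro countable_disjoint_family_emeasure_pos[of "\<lambda>Q. Q"])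
      (auto simp: disjoint_cubes_def disjoint_family_on_def pairwise_def disjnt_def)
qed (simp add: disjoint_cubes_def)

lemma countable_cube_class_sparse: "countable_cube_class sparse"
  unfolding countable_cube_class_def
proof (intro conjI allI impI)
  fix P :: "'a set set" assume P: "sparse P"
  then show "P \<subseteq> Collect cube" unfolding sparse_def by blast
  from P obtain E where
    E: "\<forall>Q\<in>P. E Q \<in> sets lebesgue \<and> E Q \<subseteq> Q \<and> measure lebesgue (E Q) \<ge> measure lebesgue Q / 2"
      "disjoint_family_on E P"
    unfolding sparse_def by blast
  have "emeasure lebesgue (E Q) > 0" if Q: "Q \<in> P" for Q
  proof -
    have "cube Q" using P Q unfolding sparse_def by blast
    then have "measure lebesgue (E Q) > 0" using measure_cube_pos[of Q] E(1) Q by fastforce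
    then show ?thesis by (simp add: measure_def enn2real_positive_iff)
  qed
  then show "countable P" using E by (intro countable_disjoint_family_emeasure_pos[of E]) auto
next
  fix Q :: "'a set" assume Q: "cube Q"
  show "sparse {Q}" unfolding sparse_def
    using Q cube_sets_lebesgue[OF Q] measure_nonneg[of lebesgue Q]
    by (intro conjI exI[of _ "\<lambda>Q. Q"]) (auto simp: disjoint_family_on_def)
qed

lemma avg_op_singleton: "avg_op {Q} f x = avg Q f * indicator Q x"
  by (simp only: avg_op_def infsum_finite[OF finite.insertI[OF finite.emptyI]]
      sum.insert[OF finite.emptyI empty_iff[THEN iffD1, THEN notI]] sum.empty add_0_right)

lemma avg_op_measurable:
  assumes "countable P" "P \<subseteq> Collect cube"
  shows "(\<lambda>x. avg_op P f x) \<in> borel_measurable lebesgue"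
  unfolding avg_op_def
proof (intro borel_measurable_infsum_ennreal[OF assms(1)])
  fix Q assume "Q \<in> P"
  then have [measurable]: "Q \<in> sets lebesgue" using assms(2) cube_sets_lebesgue by blast
  show "(\<lambda>x. avg Q f * indicator Q x) \<in> borel_measurable lebesgue" by measurable
qed

lemma avg_finite_imp_nn_integral_finite:
  assumes "cube Q" "avg Q f < \<infinity>"
  shows "(\<integral>\<^sup>+x\<in>Q. ennreal \<bar>f x\<bar> \<partial>lebesgue) < \<infinity>"
proof -
  have "(\<integral>\<^sup>+x\<in>Q. ennreal \<bar>f x\<bar> \<partial>lebesgue) \<noteq> top"
    using assms emeasure_cube_finite[OF assms(1)] unfolding avg_def
    by (metis ennreal_divide_eq_top_iff infinity_ennreal_def less_irrefl)
  then show ?thesis by (simp add: less_top)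
qed

lemma nn_integral_avg_op:
  assumes P: "countable P" "P \<subseteq> Collect cube"
    and [measurable]: "u \<in> borel_measurable lebesgue" "v \<in> borel_measurable lebesgue"
  shows "(\<integral>\<^sup>+x. avg_op P u x * ennreal \<bar>v x\<bar> \<partial>lebesgue)
       = (\<Sum>\<^sub>\<infinity>Q\<in>P. (\<integral>\<^sup>+x\<in>Q. ennreal \<bar>u x\<bar> \<partial>lebesgue) * (\<integral>\<^sup>+x\<in>Q. ennreal \<bar>v x\<bar> \<partial>lebesgue) / emeasure lebesgue Q)"
proof -
  have Qm[measurable]: "Q \<in> sets lebesgue" if "Q \<in> P" for Q using that P(2) cube_sets_lebesgue by blast
  have "(\<integral>\<^sup>+x. avg_op P u x * ennreal \<bar>v x\<bar> \<partial>lebesgue)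
      = (\<integral>\<^sup>+x. (\<Sum>\<^sub>\<infinity>Q\<in>P. avg Q u * indicator Q x * ennreal \<bar>v x\<bar>) \<partial>lebesgue)"
    unfolding avg_op_def by (intro nn_integral_cong infsum_ennreal_mult_right P(1))
  also have "\<dots> = (\<Sum>\<^sub>\<infinity>Q\<in>P. (\<integral>\<^sup>+x. avg Q u * indicator Q x * ennreal \<bar>v x\<bar> \<partial>lebesgue))"
    by (rule nn_integral_infsum[OF P(1)]) measurable
  also have "\<dots> = (\<Sum>\<^sub>\<infinity>Q\<in>P. (\<integral>\<^sup>+x\<in>Q. ennreal \<bar>u x\<bar> \<partial>lebesgue) * (\<integral>\<^sup>+x\<in>Q. ennreal \<bar>v x\<bar> \<partial>lebesgue) / emeasure lebesgue Q)"
  proof (rule infsum_cong)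
    fix Q assume [measurable]: "Q \<in> P"
    have "(\<integral>\<^sup>+x. avg Q u * indicator Q x * ennreal \<bar>v x\<bar> \<partial>lebesgue)
        = avg Q u * (\<integral>\<^sup>+x\<in>Q. ennreal \<bar>v x\<bar> \<partial>lebesgue)"
      by (subst nn_integral_cmult[symmetric]) (auto intro!: nn_integral_cong simp: mult_ac)
    then show "(\<integral>\<^sup>+x. avg Q u * indicator Q x * ennreal \<bar>v x\<bar> \<partial>lebesgue) =
      (\<integral>\<^sup>+x\<in>Q. ennreal \<bar>u x\<bar> \<partial>lebesgue) * (\<integral>\<^sup>+x\<in>Q. ennreal \<bar>v x\<bar> \<partial>lebesgue) / emeasure lebesgue Q"
      unfolding avg_def by (simp add: divide_ennreal_def mult_ac)
  qed
  finally show ?thesis .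
qed

lemma nn_integral_avg_op_commute:
  assumes "countable P" "P \<subseteq> Collect cube"
    and "u \<in> borel_measurable lebesgue" "v \<in> borel_measurable lebesgue"
  shows "(\<integral>\<^sup>+x. avg_op P u x * ennreal \<bar>v x\<bar> \<partial>lebesgue) = (\<integral>\<^sup>+x. avg_op P v x * ennreal \<bar>u x\<bar> \<partial>lebesgue)"
  unfolding nn_integral_avg_op[OF assms] nn_integral_avg_op[OF assms(1,2,4,3)] by (simp add: mult_ac)

context quasi_banach_function_space
begin

lemma avg_bound_const_nonneg:
  assumes cls: "countable_cube_class adm" and bound: "avg_bound adm X N C"
  shows "C \<ge> 0"
proof -
  obtain f where f: "f \<in> X" "N f = 1" using exists_norm_eq_1 by blast
  obtain Q :: "'a set" where "cube Q" using exists_cube by blast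
  then have "adm {Q}" by (rule countable_cube_classD(3)[OF cls])
  then have "(\<lambda>x. enn2real (avg_op {Q} f x)) \<in> X \<and> N (\<lambda>x. enn2real (avg_op {Q} f x)) \<le> C * N f"
    using bound f(1) unfolding avg_bound_def by blast
  then show ?thesis using norm_nonneg f(2) by force
qed

lemma indicator_cube_kothe_of_avg_bound:
  assumes cls: "countable_cube_class adm" and bound: "avg_bound adm X N C" and Q: "cube Q"
  shows "indicator Q \<in> kothe X"
proof -
  have "integrable lebesgue (\<lambda>x. f x * indicator Q x)" if f: "f \<in> X" for f
  proof -
    have "AE x in lebesgue. avg_op {Q} f x < \<infinity>"
      using bound countable_cube_classD(3)[OF cls Q] f unfolding avg_bound_def by blast
    then obtain x where "x \<in> Q" "avg_op {Q} f x < \<infinity>"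
      using AE_ex_in_emeasure_pos[OF _ cube_sets_lebesgue[OF Q] emeasure_cube_pos[OF Q]] by blast
    then have "avg Q f < \<infinity>" by (simp add: avg_op_singleton)
    then have "(\<integral>\<^sup>+x. ennreal (norm (f x * indicator Q x)) \<partial>lebesgue) < \<infinity>"
      using avg_finite_imp_nn_integral_finite[OF Q] by (simp add: abs_mult indicator_mult_ennreal mult_ac)
    then show ?thesis
      using measurable[OF f] cube_sets_lebesgue[OF Q] by (simp add: integrable_iff_bounded)
  qed
  then show ?thesis unfolding kothe_def using cube_sets_lebesgue[OF Q] by auto
qed

text \<open>By the symmetry of \<open>A\<^sub>P\<close> under the pairing and Hoelder's inequality in \<open>X\<close>.\<close>
lemma avg_bound_kothe:
  assumes cls: "countable_cube_class adm" and bound: "avg_bound adm X N C"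
  shows "avg_bound adm (kothe X) (kothe_norm X N) C"
  unfolding avg_bound_def
proof (intro allI impI ballI)
  fix P g assume adm: "adm P" and g: "g \<in> kothe X"
  have P: "countable P" "P \<subseteq> Collect cube" using countable_cube_classD[OF cls] adm by auto
  have gm[measurable]: "g \<in> borel_measurable lebesgue" using g unfolding kothe_def by auto
  have C: "C * kothe_norm X N g \<ge> 0"
    using avg_bound_const_nonneg[OF cls bound] kothe_norm_nonneg[OF g] by simp
  have "(\<integral>\<^sup>+x. ennreal \<bar>f x\<bar> * avg_op P g x \<partial>lebesgue) \<le> ennreal (C * kothe_norm X N g * N f)"
    if f: "f \<in> X" for f
  proof -
    have fm[measurable]: "f \<in> borel_measurable lebesgue" using measurable[OF f] .
    define h where "h x = enn2real (avg_op P f x)" for x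
    have fin: "AE x in lebesgue. avg_op P f x < \<infinity>" and h: "h \<in> X" "N h \<le> C * N f"
      using bound adm f unfolding avg_bound_def h_def by auto
    have "(\<integral>\<^sup>+x. ennreal \<bar>f x\<bar> * avg_op P g x \<partial>lebesgue) = (\<integral>\<^sup>+x. avg_op P f x * ennreal \<bar>g x\<bar> \<partial>lebesgue)"
      using nn_integral_avg_op_commute[OF P gm fm] by (simp add: mult.commute)
    also have "\<dots> = (\<integral>\<^sup>+x. ennreal \<bar>h x * g x\<bar> \<partial>lebesgue)"
      using fin by (intro nn_integral_cong_AE) (auto simp: h_def abs_mult ennreal_mult elim!: eventually_mono)
    also have "\<dots> \<le> ennreal (N h * kothe_norm X N g)" by (rule kothe_holder_nn[OF h(1) g])
    also have "\<dots> \<le> ennreal (C * N f * kothe_norm X N g)"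
      by (intro ennreal_leI mult_right_mono h(2) kothe_norm_nonneg g)
    finally show ?thesis by (simp add: mult_ac)
  qed
  then show "(AE x in lebesgue. avg_op P g x < \<infinity>) \<and> (\<lambda>x. enn2real (avg_op P g x)) \<in> kothe X \<and>
      kothe_norm X N (\<lambda>x. enn2real (avg_op P g x)) \<le> C * kothe_norm X N g"
    using AE_finite_of_nn_integral_bound kothe_mem_enn2real kothe_norm_enn2real_le
      avg_op_measurable[OF P] C by blast
qed

end

section \<open>The Lorentz--Luxemburg theorem\<close>

lemma integrable_square_mult:
  fixes a b :: "'a \<Rightarrow> real"
  assumes "integrable M (\<lambda>x. (a x)\<^sup>2)" "integrable M (\<lambda>x. (b x)\<^sup>2)"
    and [measurable]: "a \<in> borel_measurable M" "b \<in> borel_measurable M"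
  shows "integrable M (\<lambda>x. a x * b x)"
proof (rule Bochner_Integration.integrable_bound)
  show "integrable M (\<lambda>x. (a x)\<^sup>2 + (b x)\<^sup>2)" using assms(1,2) by simp
  show "(\<lambda>x. a x * b x) \<in> borel_measurable M" by measurable
  have "\<bar>a x * b x\<bar> \<le> (a x)\<^sup>2 + (b x)\<^sup>2" for x
  proof -
    have "0 \<le> (\<bar>a x\<bar> - \<bar>b x\<bar>)\<^sup>2" by simp
    also have "\<dots> = (a x)\<^sup>2 + (b x)\<^sup>2 - 2 * \<bar>a x * b x\<bar>" by (simp add: power2_eq_square algebra_simps abs_mult)
    finally show ?thesis by simp
  qed
  then show "AE x in M. norm (a x * b x) \<le> norm ((a x)\<^sup>2 + (b x)\<^sup>2)" by simp
qed

lemma integrable_square_add: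
  fixes a b :: "'a \<Rightarrow> real"
  assumes "integrable M (\<lambda>x. (a x)\<^sup>2)" "integrable M (\<lambda>x. (b x)\<^sup>2)"
    and "a \<in> borel_measurable M" "b \<in> borel_measurable M"
  shows "integrable M (\<lambda>x. (a x + b x)\<^sup>2)"
proof -
  have "integrable M (\<lambda>x. (a x)\<^sup>2 + 2 * (a x * b x) + (b x)\<^sup>2)"
    using assms integrable_square_mult[OF assms] by simp
  then show ?thesis by (simp add: power2_sum mult.assoc add_ac)
qed

lemma integrable_square_scale:
  fixes a :: "'a \<Rightarrow> real"
  assumes "integrable M (\<lambda>x. (a x)\<^sup>2)"
  shows "integrable M (\<lambda>x. (c * a x)\<^sup>2)"
  using integrable_mult_right[OF assms, of "c\<^sup>2"] by (simp add: power_mult_distrib)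

lemma integrable_square_diff:
  fixes a b :: "'a \<Rightarrow> real"
  assumes "integrable M (\<lambda>x. (a x)\<^sup>2)" "integrable M (\<lambda>x. (b x)\<^sup>2)"
    and "a \<in> borel_measurable M" "b \<in> borel_measurable M"
  shows "integrable M (\<lambda>x. (a x - b x)\<^sup>2)"
  using integrable_square_add[OF assms(1) integrable_square_scale[OF assms(2), of "-1"] assms(3)]
    assms(4) by simp

lemma abs_le_amgm:
  fixes a t :: real
  assumes "a > 0"
  shows "\<bar>t\<bar> \<le> (a * t\<^sup>2 + 1 / a) / 2"
proof -
  have "0 \<le> (a * \<bar>t\<bar> - 1)\<^sup>2" by simp
  also have "(a * \<bar>t\<bar> - 1)\<^sup>2 = a * (a * t\<^sup>2 + 1 / a - 2 * \<bar>t\<bar>)"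
    using assms by (simp add: power2_eq_square field_simps)
  finally show ?thesis using assms by (simp add: zero_le_mult_iff)
qed

lemma nn_integral_abs_le_amgm:
  fixes g :: "'a \<Rightarrow> real"
  assumes E: "E \<in> sets M" "emeasure M E < \<infinity>" and g: "g \<in> borel_measurable M"
    and g_vanishes: "\<And>x. x \<notin> E \<Longrightarrow> g x = 0" and g2: "integrable M (\<lambda>x. (g x)\<^sup>2)" and a: "a > 0"
  shows "(\<integral>\<^sup>+x. ennreal \<bar>g x\<bar> \<partial>M) \<le> ennreal ((a * (\<integral>x. (g x)\<^sup>2 \<partial>M) + measure M E / a) / 2)"
proof -
  have int: "integrable M (\<lambda>x. (a * (g x)\<^sup>2 + (1 / a) * indicator E x) / 2)"
    using g2 E by (simp add: top.not_eq_extremum)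
  have "\<bar>g x\<bar> \<le> (a * (g x)\<^sup>2 + (1 / a) * indicator E x) / 2" for x
    using abs_le_amgm[OF a, of "g x"] g_vanishes[of x] by (cases "x \<in> E") simp_all
  then have "(\<integral>\<^sup>+x. ennreal \<bar>g x\<bar> \<partial>M) \<le> (\<integral>\<^sup>+x. ennreal ((a * (g x)\<^sup>2 + (1 / a) * indicator E x) / 2) \<partial>M)"
    by (intro nn_integral_mono ennreal_leI)
  also have "\<dots> = ennreal (\<integral>x. (a * (g x)\<^sup>2 + (1 / a) * indicator E x) / 2 \<partial>M)"
    using a by (intro nn_integral_eq_integral[OF int] AE_I2) simp
  also have "(\<integral>x. (a * (g x)\<^sup>2 + (1 / a) * indicator E x) / 2 \<partial>M) = (a * (\<integral>x. (g x)\<^sup>2 \<partial>M) + measure M E / a) / 2"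
    using g2 E by (simp add: top.not_eq_extremum)
  finally show ?thesis .
qed

lemma AE_convergent_of_summable_increments:
  fixes s :: "nat \<Rightarrow> 'a \<Rightarrow> real"
  assumes s[measurable]: "\<And>k. s k \<in> borel_measurable M"
    and summable: "(\<Sum>k. \<integral>\<^sup>+x. ennreal \<bar>s (Suc k) x - s k x\<bar> \<partial>M) < \<infinity>"
  shows "AE x in M. (\<lambda>k. s k x) \<longlonglongrightarrow> s 0 x + (\<Sum>k. s (Suc k) x - s k x)"
proof -
  define d where "d k x = s (Suc k) x - s k x" for k x
  have [measurable]: "d k \<in> borel_measurable M" for k unfolding d_def by measurable
  have "(\<integral>\<^sup>+x. (\<Sum>k. ennreal \<bar>d k x\<bar>) \<partial>M) = (\<Sum>k. \<integral>\<^sup>+x. ennreal \<bar>d k x\<bar> \<partial>M)"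
    by (rule nn_integral_suminf) measurable
  then have "AE x in M. (\<Sum>k. ennreal \<bar>d k x\<bar>) \<noteq> \<infinity>"
    using summable unfolding d_def by (intro nn_integral_PInf_AE) auto
  then show ?thesis
  proof eventually_elim
    case (elim x)
    then have "summable (\<lambda>k. \<bar>d k x\<bar>)" by (intro summable_suminf_not_top) auto
    then have "summable (\<lambda>k. d k x)" by (rule summable_rabs_cancel)
    moreover have "(\<lambda>k. s k x) = (\<lambda>k. s 0 x + (\<Sum>j<k. d j x))"
      using sum_lessThan_telescope[of "\<lambda>j. s j x"] by (simp add: d_def)
    ultimately show ?case
      unfolding d_def[symmetric] by (simp only:) (intro tendsto_add tendsto_const summable_LIMSEQ)
  qed
qed

text \<open>On a set of finite measure, increments with squared \<open>L\<^sup>2\<close> norms \<open>4\<^sup>-\<^sup>k\<close> have \<open>L\<^sup>1\<close> norms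
  \<open>O(2\<^sup>-\<^sup>k)\<close> (AM-GM with weight \<open>2\<^sup>k\<close>).\<close>
lemma AE_convergent_of_square_increments:
  fixes s :: "nat \<Rightarrow> 'a \<Rightarrow> real"
  assumes E: "E \<in> sets M" "emeasure M E < \<infinity>" and s[measurable]: "\<And>k. s k \<in> borel_measurable M"
    and s_vanish: "\<And>k x. x \<notin> E \<Longrightarrow> s k x = 0"
    and int: "\<And>k. integrable M (\<lambda>x. (s (Suc k) x - s k x)\<^sup>2)"
    and small: "\<And>k. (\<integral>x. (s (Suc k) x - s k x)\<^sup>2 \<partial>M) \<le> (1/4) ^ k"
  obtains p where "p \<in> borel_measurable M" "AE x in M. (\<lambda>k. s k x) \<longlonglongrightarrow> p x" "\<And>x. x \<notin> E \<Longrightarrow> p x = 0"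
proof -
  define m where "m = measure M E"
  have L1: "(\<integral>\<^sup>+x. ennreal \<bar>s (Suc k) x - s k x\<bar> \<partial>M) \<le> ennreal ((1 + m) / 2 * (1/2) ^ (k + 0))" for k
  proof -
    have "(\<integral>\<^sup>+x. ennreal \<bar>s (Suc k) x - s k x\<bar> \<partial>M)
        \<le> ennreal ((2 ^ k * (\<integral>x. (s (Suc k) x - s k x)\<^sup>2 \<partial>M) + m / 2 ^ k) / 2)"
      unfolding m_def using int s_vanish by (intro nn_integral_abs_le_amgm[OF E]) auto
    also have "\<dots> \<le> ennreal ((2 ^ k * (1/4) ^ k + m / 2 ^ k) / 2)"
      using small[of k] by (intro ennreal_leI divide_right_mono add_right_mono mult_left_mono) auto
    also have "(2 ^ k * (1/4) ^ k + m / 2 ^ k) / 2 = (1 + m) / 2 * (1/2::real) ^ (k + 0)"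
      by (simp add: field_simps power_divide flip: power_mult_distrib)
    finally show ?thesis .
  qed
  have "(\<Sum>k. \<integral>\<^sup>+x. ennreal \<bar>s (Suc k) x - s k x\<bar> \<partial>M) \<le> (\<Sum>k. ennreal ((1 + m) / 2 * (1/2) ^ (k + 0)))"
    by (intro suminf_le L1) auto
  also have "\<dots> = ennreal (2 * ((1 + m) / 2) * (1/2) ^ 0)"
    by (rule suminf_ennreal_geometric_tail) (simp add: m_def)
  finally have "(\<Sum>k. \<integral>\<^sup>+x. ennreal \<bar>s (Suc k) x - s k x\<bar> \<partial>M) < \<infinity>"
    using order.strict_trans1[OF _ ennreal_less_top] by simp
  from AE_convergent_of_summable_increments[OF s this] show ?thesis
    by (rule that[rotated]) (auto simp: s_vanish)
qed

context quasi_banach_function_space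
begin

lemma
  assumes gm: "g \<in> borel_measurable lebesgue" and C: "C \<ge> 0"
    and bound: "\<And>h. h \<in> X \<Longrightarrow> N h \<le> 1 \<Longrightarrow> (\<integral>\<^sup>+x. ennreal \<bar>h x * g x\<bar> \<partial>lebesgue) \<le> ennreal C"
  shows kothe_memI_unit_ball: "g \<in> kothe X" and kothe_norm_leI_unit_ball: "kothe_norm X N g \<le> C"
proof -
  have "(\<integral>\<^sup>+x. ennreal \<bar>h x * g x\<bar> \<partial>lebesgue) \<le> ennreal (C * N h)" if h: "h \<in> X" for h
  proof (cases "N h = 0")
    case True
    then have "AE x in lebesgue. ennreal \<bar>h x * g x\<bar> = 0" using norm_eq_0_iff[OF h] by auto
    then have "(\<integral>\<^sup>+x. ennreal \<bar>h x * g x\<bar> \<partial>lebesgue) = (\<integral>\<^sup>+x. 0 \<partial>(lebesgue :: 'a measure))"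
      by (rule nn_integral_cong_AE)
    then show ?thesis by simp
  next
    case False
    then have Nh: "N h > 0" using norm_nonneg[OF h] by simp
    define h' where "h' x = inverse (N h) * h x" for x
    have "h' \<in> X" "N h' \<le> 1" unfolding h'_def using scale_mem[OF h] norm_scale[OF h] Nh by auto
    have "(\<integral>\<^sup>+x. ennreal \<bar>h x * g x\<bar> \<partial>lebesgue) = (\<integral>\<^sup>+x. ennreal (N h) * ennreal \<bar>h' x * g x\<bar> \<partial>lebesgue)"
      unfolding h'_def using Nh by (intro nn_integral_cong) (simp add: abs_mult ennreal_mult[symmetric])
    also have "\<dots> = ennreal (N h) * (\<integral>\<^sup>+x. ennreal \<bar>h' x * g x\<bar> \<partial>lebesgue)"
      using measurable[OF h] gm by (intro nn_integral_cmult) (auto simp: h'_def)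
    also have "\<dots> \<le> ennreal (N h) * ennreal C"
      by (intro mult_left_mono bound) (use \<open>h' \<in> X\<close> \<open>N h' \<le> 1\<close> in auto)
    finally show ?thesis using Nh C by (simp add: ennreal_mult[symmetric] mult.commute)
  qed
  then show "g \<in> kothe X" "kothe_norm X N g \<le> C" using kothe_memI[OF gm C] kothe_norm_leI[OF gm C] by auto
qed

end

locale banach_function_space_fatou = quasi_banach_function_space +
  assumes triangle: "\<And>f g. f \<in> X \<Longrightarrow> g \<in> X \<Longrightarrow> N (\<lambda>x. f x + g x) \<le> N f + N g"
    and fatou: "fatou_property X N"
begin

lemma fatou_mem_norm_le:
  assumes w: "\<And>n. w n \<in> X" "\<And>n. N (w n) \<le> L" "\<And>n x. 0 \<le> w n x" "\<And>n x. w n x \<le> w (Suc n) x"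
    and p: "p \<in> borel_measurable lebesgue" "AE x in lebesgue. (\<lambda>n. w n x) \<longlonglongrightarrow> \<bar>p x\<bar>"
  shows "p \<in> X" and "N p \<le> L"
proof -
  have "bounded (range (\<lambda>n. N (w n)))"
    using w(2) norm_nonneg[OF w(1)] unfolding bounded_iff by (intro exI[of _ L]) auto
  moreover have "(\<lambda>x. \<bar>p x\<bar>) \<in> borel_measurable lebesgue" using p(1) by measurable
  moreover have "AE x in lebesgue. (\<forall>n. 0 \<le> w n x \<and> w n x \<le> w (Suc n) x) \<and> (\<lambda>n. w n x) \<longlonglongrightarrow> \<bar>p x\<bar>"
    using p(2) by eventually_elim (use w(3,4) in blast)
  ultimately have "(\<lambda>x. \<bar>p x\<bar>) \<in> X \<and> N (\<lambda>x. \<bar>p x\<bar>) = (SUP n. N (w n))"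
    using w(1) by (intro fatou[unfolded fatou_property_def, rule_format]) blast
  then have abs: "(\<lambda>x. \<bar>p x\<bar>) \<in> X" "N (\<lambda>x. \<bar>p x\<bar>) \<le> L" using w(2) by (auto intro!: cSUP_least)
  show "p \<in> X" "N p \<le> L" using ideal_mem[OF abs(1) p(1)] abs(2) by auto
qed

text \<open>The lower envelopes \<open>inf\<^sub>k\<^sub>\<ge>\<^sub>n \<bar>h\<^sub>k\<bar>\<close> increase to \<open>\<bar>p\<bar>\<close>, so the Fatou property applies.\<close>
lemma unit_ball_closed_AE_limit:
  assumes h: "\<And>n. h n \<in> X" "\<And>n. N (h n) \<le> 1" and p: "p \<in> borel_measurable lebesgue"
    and conv: "AE x in lebesgue. (\<lambda>n. h n x) \<longlonglongrightarrow> p x"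
  shows "p \<in> X \<and> N p \<le> 1"
proof -
  have [measurable]: "h n \<in> borel_measurable lebesgue" for n using measurable[OF h(1)] .
  define v where "v n x = (INF k\<in>{n..}. ennreal \<bar>h k x\<bar>)" for n x
  have v_le: "v n x \<le> ennreal \<bar>h n x\<bar>" for n x unfolding v_def by (rule INF_lower) simp
  have v_mono: "v n x \<le> v m x" if "n \<le> m" for n m x unfolding v_def using that by (intro INF_mono) auto
  have v_fin: "v n x < top" for n x using v_le[of n x] by (simp add: le_less_trans)
  define w where "w n x = enn2real (v n x)" for n x
  have wm: "w n \<in> borel_measurable lebesgue" for n unfolding w_def v_def by measurable
  have ae: "AE x in lebesgue. \<bar>w n x\<bar> \<le> \<bar>h n x\<bar>" for n
    using v_le[of n] unfolding w_def by (intro AE_I2) (simp add: enn2real_leI)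
  have wX: "w n \<in> X" for n by (rule ideal_mem(1)[OF h(1) wm ae])
  have wN: "N (w n) \<le> 1" for n using ideal_mem(2)[OF h(1) wm ae, of n] h(2)[of n] by linarith
  have w_mono: "w n x \<le> w (Suc n) x" for n x
    unfolding w_def using v_mono[of n "Suc n" x] v_fin by (intro enn2real_mono) auto
  have w_nonneg: "0 \<le> w n x" for n x unfolding w_def by simp
  have w_conv: "AE x in lebesgue. (\<lambda>n. w n x) \<longlonglongrightarrow> \<bar>p x\<bar>"
    using conv
  proof eventually_elim
    case (elim x)
    then have "(\<lambda>n. ennreal \<bar>h n x\<bar>) \<longlonglongrightarrow> ennreal \<bar>p x\<bar>" by (intro tendsto_ennrealI tendsto_rabs)
    then have "liminf (\<lambda>n. ennreal \<bar>h n x\<bar>) = ennreal \<bar>p x\<bar>" by (rule lim_imp_Liminf[rotated]) simp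
    then have "(SUP n. v n x) = ennreal \<bar>p x\<bar>" unfolding v_def liminf_SUP_INF by simp
    moreover have "incseq (\<lambda>n. v n x)" unfolding incseq_def using v_mono by blast
    ultimately have "(\<lambda>n. v n x) \<longlonglongrightarrow> ennreal \<bar>p x\<bar>" using LIMSEQ_SUP by metis
    then show ?case unfolding w_def by (intro tendsto_enn2real) auto
  qed
  show ?thesis using fatou_mem_norm_le[OF wX wN w_nonneg w_mono p w_conv] by blast
qed

end

text \<open>The separation step of the Lorentz--Luxemburg theorem: \<open>U\<close> is the part of the unit ball of
  \<open>X\<close> in \<open>L\<^sup>2(E)\<close>, and for the projection \<open>p\<close> of \<open>f\<close> onto \<open>U\<close> the residual \<open>\<bar>f - p\<bar>\<close> separates
  \<open>f\<close> from the unit ball.\<close>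
locale unit_ball_projection = banach_function_space_fatou X N
  for X :: "('a::euclidean_space \<Rightarrow> real) set" and N +
  fixes E :: "'a set" and f :: "'a \<Rightarrow> real" and B :: real
  assumes E_sets: "E \<in> sets lebesgue" and E_finite: "emeasure lebesgue E < \<infinity>"
    and f_measurable[measurable]: "f \<in> borel_measurable lebesgue"
    and f_bounded: "\<And>x. \<bar>f x\<bar> \<le> B" and f_vanishes: "\<And>x. x \<notin> E \<Longrightarrow> f x = 0"
begin

definition U :: "('a \<Rightarrow> real) set" where
  "U = {h \<in> X. N h \<le> 1 \<and> (\<forall>x. x \<notin> E \<longrightarrow> h x = 0) \<and> integrable lebesgue (\<lambda>x. (h x)\<^sup>2)}"

definition dist2 :: "('a \<Rightarrow> real) \<Rightarrow> real" where
  "dist2 h = (\<integral>x. (f x - h x)\<^sup>2 \<partial>lebesgue)"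

definition dist2_inf :: real where
  "dist2_inf = Inf (dist2 ` U)"

lemma f_square_integrable: "integrable lebesgue (\<lambda>x. (f x)\<^sup>2)"
proof (rule Bochner_Integration.integrable_bound)
  show "integrable lebesgue (\<lambda>x. B\<^sup>2 * indicator E x)" using E_sets E_finite by simp
  have "(f x)\<^sup>2 \<le> B\<^sup>2 * indicator E x" for x
    using f_vanishes[of x] power_mono[OF f_bounded[of x] abs_ge_zero, of 2] by (cases "x \<in> E") simp_all
  then show "AE x in lebesgue. norm ((f x)\<^sup>2) \<le> norm (B\<^sup>2 * indicator E x)" by (simp add: indicator_def)
qed simp

lemma U_memD:
  assumes "h \<in> U"
  shows "h \<in> X" "N h \<le> 1" "\<And>x. x \<notin> E \<Longrightarrow> h x = 0" "integrable lebesgue (\<lambda>x. (h x)\<^sup>2)"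
    and "h \<in> borel_measurable lebesgue"
  using assms measurable unfolding U_def by auto

lemma zero_mem_U: "(\<lambda>x. 0) \<in> U"
  unfolding U_def using zero_mem norm_zero by simp

lemma U_convex:
  assumes a: "a \<in> U" and b: "b \<in> U" and t: "0 \<le> t" "t \<le> 1"
  shows "(\<lambda>x. (1 - t) * a x + t * b x) \<in> U"
proof -
  have X: "(\<lambda>x. (1 - t) * a x) \<in> X" "(\<lambda>x. t * b x) \<in> X" using scale_mem U_memD(1) a b by auto
  have "N (\<lambda>x. (1 - t) * a x + t * b x) \<le> N (\<lambda>x. (1 - t) * a x) + N (\<lambda>x. t * b x)"
    by (rule triangle[OF X])
  also have "\<dots> = (1 - t) * N a + t * N b" using norm_scale U_memD(1) a b t by simp
  also have "\<dots> \<le> (1 - t) * 1 + t * 1" using U_memD(2) a b t by (intro add_mono mult_left_mono) auto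
  finally have "N (\<lambda>x. (1 - t) * a x + t * b x) \<le> 1" by simp
  moreover have "integrable lebesgue (\<lambda>x. ((1 - t) * a x + t * b x)\<^sup>2)"
    using U_memD(4,5)[OF a] U_memD(4,5)[OF b]
    by (intro integrable_square_add integrable_square_scale) auto
  ultimately show ?thesis using add_mem[OF X] U_memD(3)[OF a] U_memD(3)[OF b] unfolding U_def by auto
qed

lemma dist2_integrable: "h \<in> U \<Longrightarrow> integrable lebesgue (\<lambda>x. (f x - h x)\<^sup>2)"
  using integrable_square_diff[OF f_square_integrable U_memD(4) f_measurable U_memD(5)] .

lemma dist2_inf_le: "h \<in> U \<Longrightarrow> dist2_inf \<le> dist2 h"
  unfolding dist2_inf_def dist2_def by (intro cInf_lower bdd_belowI[of _ 0]) auto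

lemma dist2_inf_nonneg: "0 \<le> dist2_inf"
  unfolding dist2_inf_def dist2_def using zero_mem_U by (intro cInf_greatest) auto

text \<open>The parallelogram law, with the midpoint \<open>(a + b)/2 \<in> U\<close> at distance at least
  \<open>dist2_inf\<close> from \<open>f\<close>.\<close>
lemma U_parallelogram:
  assumes a: "a \<in> U" and b: "b \<in> U"
  shows "(\<integral>x. (a x - b x)\<^sup>2 \<partial>lebesgue) \<le> 2 * dist2 a + 2 * dist2 b - 4 * dist2_inf"
proof -
  define c where "c = (\<lambda>x. (1 - 1/2) * a x + (1/2) * b x)"
  have c: "c \<in> U" unfolding c_def by (rule U_convex[OF a b]) auto
  have "(a x - b x)\<^sup>2 = 2 * (f x - a x)\<^sup>2 + 2 * (f x - b x)\<^sup>2 - 4 * (f x - c x)\<^sup>2" for x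
    unfolding c_def by (simp add: power2_eq_square algebra_simps)
  then have "(\<integral>x. (a x - b x)\<^sup>2 \<partial>lebesgue) = 2 * dist2 a + 2 * dist2 b - 4 * dist2 c"
    unfolding dist2_def using dist2_integrable[OF a] dist2_integrable[OF b] dist2_integrable[OF c] by simp
  then show ?thesis using dist2_inf_le[OF c] by simp
qed

lemma nn_integral_dist2_limit_le:
  assumes s: "\<And>k. s k \<in> U" and p[measurable]: "p \<in> borel_measurable lebesgue"
    and conv: "AE x in lebesgue. (\<lambda>k. s k x) \<longlonglongrightarrow> p x" and lim: "(\<lambda>k. dist2 (s k)) \<longlonglongrightarrow> L"
  shows "(\<integral>\<^sup>+x. ennreal ((f x - p x)\<^sup>2) \<partial>lebesgue) \<le> ennreal L"
proof -
  have [measurable]: "s k \<in> borel_measurable lebesgue" for k using U_memD(5)[OF s] .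
  have "(\<integral>\<^sup>+x. ennreal ((f x - p x)\<^sup>2) \<partial>lebesgue) = (\<integral>\<^sup>+x. liminf (\<lambda>k. ennreal ((f x - s k x)\<^sup>2)) \<partial>lebesgue)"
    using conv by (intro nn_integral_cong_AE) (auto intro!: lim_imp_Liminf[symmetric]
        tendsto_ennrealI tendsto_intros elim!: eventually_mono)
  also have "\<dots> \<le> liminf (\<lambda>k. \<integral>\<^sup>+x. ennreal ((f x - s k x)\<^sup>2) \<partial>lebesgue)"
    by (rule nn_integral_liminf) measurable
  also have "(\<lambda>k. \<integral>\<^sup>+x. ennreal ((f x - s k x)\<^sup>2) \<partial>lebesgue) = (\<lambda>k. ennreal (dist2 (s k)))"
    unfolding dist2_def by (intro ext nn_integral_eq_integral dist2_integrable s) auto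
  also have "liminf (\<lambda>k. ennreal (dist2 (s k))) = ennreal L"
    using lim by (intro lim_imp_Liminf tendsto_ennrealI) auto
  finally show ?thesis .
qed

lemma exists_dist2_minimizer:
  obtains p where "p \<in> U" "dist2 p = dist2_inf"
proof -
  have "\<exists>h\<in>U. dist2 h < dist2_inf + (1/4) ^ Suc k" for k
  proof -
    have "Inf (dist2 ` U) < dist2_inf + (1/4) ^ Suc k" unfolding dist2_inf_def by simp
    then show ?thesis using cInf_lessD[of "dist2 ` U"] zero_mem_U by blast
  qed
  then have "\<forall>k. \<exists>h. h \<in> U \<and> dist2 h < dist2_inf + (1/4) ^ Suc k" by blast
  then obtain s where s: "\<And>k. s k \<in> U" "\<And>k. dist2 (s k) < dist2_inf + (1/4) ^ Suc k"
    by (auto dest!: choice)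
  have sm[measurable]: "s k \<in> borel_measurable lebesgue" for k using U_memD(5)[OF s(1)] .
  have step: "(\<integral>x. (s (Suc k) x - s k x)\<^sup>2 \<partial>lebesgue) \<le> (1/4) ^ k" for k
  proof -
    have "(1/4::real) ^ Suc k = (1/4) ^ k / 4" "(1/4::real) ^ Suc (Suc k) = (1/4) ^ k / 16" by simp_all
    moreover have "(0::real) \<le> (1/4) ^ k" by simp
    ultimately show ?thesis
      using U_parallelogram[OF s(1) s(1), of "Suc k" k] s(2)[of k] s(2)[of "Suc k"] by linarith
  qed
  obtain p where pm[measurable]: "p \<in> borel_measurable lebesgue"
    and conv: "AE x in lebesgue. (\<lambda>k. s k x) \<longlonglongrightarrow> p x" and p_vanishes: "\<And>x. x \<notin> E \<Longrightarrow> p x = 0"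
    using AE_convergent_of_square_increments[OF E_sets E_finite sm U_memD(3)[OF s(1)]
        integrable_square_diff[OF U_memD(4)[OF s(1)] U_memD(4)[OF s(1)] sm sm] step] by blast
  have pX: "p \<in> X \<and> N p \<le> 1" using unit_ball_closed_AE_limit[OF U_memD(1,2)[OF s(1)] pm conv] .
  have "(\<lambda>k. dist2 (s k)) \<longlonglongrightarrow> dist2_inf"
  proof (rule tendsto_sandwich[of "\<lambda>k. dist2_inf" _ _ "\<lambda>k. dist2_inf + (1/4) ^ Suc k"])
    show "(\<lambda>k. dist2_inf + (1/4) ^ Suc k) \<longlonglongrightarrow> dist2_inf"
      using tendsto_add[OF tendsto_const LIMSEQ_Suc[OF LIMSEQ_realpow_zero[of "1/4"]]] by simp
    show "\<forall>\<^sub>F k in sequentially. dist2 (s k) \<le> dist2_inf + (1/4) ^ Suc k"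
      using s(2) by (intro always_eventually allI less_imp_le)
  qed (use dist2_inf_le[OF s(1)] in auto)
  then have fp: "(\<integral>\<^sup>+x. ennreal ((f x - p x)\<^sup>2) \<partial>lebesgue) \<le> ennreal dist2_inf"
    by (rule nn_integral_dist2_limit_le[OF s(1) pm conv])
  then have fp_int: "integrable lebesgue (\<lambda>x. (f x - p x)\<^sup>2)"
    unfolding integrable_iff_bounded by (auto intro: le_less_trans)
  have "integrable lebesgue (\<lambda>x. (f x - (f x - p x))\<^sup>2)"
    using integrable_square_diff[OF f_square_integrable fp_int] by simp
  then have pU: "p \<in> U" unfolding U_def using pX p_vanishes by simp
  have "ennreal (dist2 p) \<le> ennreal dist2_inf"
    using fp unfolding dist2_def by (subst nn_integral_eq_integral[OF fp_int, symmetric]) auto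
  then have "dist2 p \<le> dist2_inf" using dist2_inf_nonneg by (simp add: ennreal_le_iff)
  then show ?thesis using that[OF pU] dist2_inf_le[OF pU] by simp
qed

lemma minimizer_variational:
  assumes p: "p \<in> U" "dist2 p = dist2_inf" and h: "h \<in> U"
  shows "(\<integral>x. (f x - p x) * h x \<partial>lebesgue) \<le> (\<integral>x. (f x - p x) * p x \<partial>lebesgue)"
proof -
  have [measurable]: "p \<in> borel_measurable lebesgue" "h \<in> borel_measurable lebesgue"
    using U_memD(5) p h by auto
  define W where "W = (\<integral>x. (h x - p x)\<^sup>2 \<partial>lebesgue)"
  define c where "c = (\<integral>x. (f x - p x) * (h x - p x) \<partial>lebesgue)"
  have g2: "integrable lebesgue (\<lambda>x. (f x - p x)\<^sup>2)" by (rule dist2_integrable[OF p(1)])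
  have W: "integrable lebesgue (\<lambda>x. (h x - p x)\<^sup>2)"
    by (rule integrable_square_diff[OF U_memD(4)[OF h] U_memD(4)[OF p(1)]]) measurable
  have int: "integrable lebesgue (\<lambda>x. (f x - p x) * (h x - p x))"
    by (rule integrable_square_mult[OF g2 W]) measurable
  have "c \<le> 0"
  proof (rule ccontr)
    assume "\<not> c \<le> 0"
    then have c_pos: "c > 0" by simp
    have W_nonneg: "0 \<le> W" unfolding W_def by simp
    define t where "t = min 1 (c / (W + 1))"
    have t: "0 < t" "t \<le> 1" unfolding t_def using c_pos W_nonneg by auto
    have q: "(\<lambda>x. (1 - t) * p x + t * h x) \<in> U" by (rule U_convex[OF p(1) h]) (use t in auto)
    have "(f x - ((1 - t) * p x + t * h x))\<^sup>2
        = (f x - p x)\<^sup>2 - 2 * t * ((f x - p x) * (h x - p x)) + t\<^sup>2 * (h x - p x)\<^sup>2" for x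
      by (simp add: power2_eq_square algebra_simps)
    then have "dist2 (\<lambda>x. (1 - t) * p x + t * h x) = dist2 p - 2 * t * c + t\<^sup>2 * W"
      unfolding dist2_def W_def c_def using g2 int W by simp
    then have "2 * t * c \<le> t\<^sup>2 * W" using dist2_inf_le[OF q] p(2) by simp
    then have "2 * c \<le> t * W" using t by (simp add: power2_eq_square)
    also have "t * W \<le> c / (W + 1) * W" unfolding t_def using W_nonneg by (intro mult_right_mono) auto
    also have "\<dots> < c" using c_pos W_nonneg by (simp add: field_simps)
    finally show False using c_pos by simp
  qed
  moreover have "c = (\<integral>x. (f x - p x) * h x \<partial>lebesgue) - (\<integral>x. (f x - p x) * p x \<partial>lebesgue)"
    unfolding c_def using U_memD(4)[OF h] U_memD(4)[OF p(1)]
    by (simp add: right_diff_distrib integrable_square_mult[OF g2])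
  ultimately show ?thesis by simp
qed

lemma tendsto_min_of_nat: "(\<lambda>k. min a (real k)) \<longlonglongrightarrow> a"
proof (rule tendsto_eventually)
  obtain k0 :: nat where "a \<le> real k0" using real_arch_simple by blast
  then show "\<forall>\<^sub>F k in sequentially. min a (real k) = a"
    by (intro eventually_sequentiallyI[of k0]) (auto simp: min_def)
qed

lemma truncation_mem_U:
  assumes h: "h \<in> X" "N h \<le> 1" and g[measurable]: "g \<in> borel_measurable lebesgue"
  shows "(\<lambda>x. sgn (g x) * min \<bar>h x\<bar> (real k) * indicator E x) \<in> U"
proof -
  let ?t = "\<lambda>x. sgn (g x) * min \<bar>h x\<bar> (real k) * indicator E x"
  have [measurable]: "h \<in> borel_measurable lebesgue" "E \<in> sets lebesgue" using measurable[OF h(1)] E_sets .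
  have tm: "?t \<in> borel_measurable lebesgue" by measurable
  have "AE x in lebesgue. \<bar>?t x\<bar> \<le> \<bar>h x\<bar>" by (intro AE_I2) (auto simp: abs_mult sgn_if indicator_def)
  then have "?t \<in> X" "N ?t \<le> 1" using ideal_mem[OF h(1) tm] h(2) by auto
  moreover have "integrable lebesgue (\<lambda>x. (?t x)\<^sup>2)"
  proof (rule Bochner_Integration.integrable_bound)
    show "integrable lebesgue (\<lambda>x. (real k)\<^sup>2 * indicator E x)" using E_sets E_finite by simp
    show "AE x in lebesgue. norm ((?t x)\<^sup>2) \<le> norm ((real k)\<^sup>2 * indicator E x)"
      by (intro AE_I2) (auto simp: sgn_if indicator_def power_mono)
  qed simp
  ultimately show ?thesis unfolding U_def by simp
qed

text \<open>Testing the residual against the truncations \<open>sgn (f - p) \<cdot> min \<bar>h\<bar> k \<cdot> \<one>\<^sub>E \<in> U\<close> of a function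
  \<open>h\<close> of norm at most one bounds its dual norm.\<close>
lemma
  assumes p: "p \<in> U" "dist2 p = dist2_inf"
  shows residual_kothe_mem: "(\<lambda>x. \<bar>f x - p x\<bar>) \<in> kothe X"
    and residual_kothe_norm: "kothe_norm X N (\<lambda>x. \<bar>f x - p x\<bar>) \<le> (\<integral>x. (f x - p x) * p x \<partial>lebesgue)"
proof -
  have [measurable]: "p \<in> borel_measurable lebesgue" using U_memD(5) p by auto
  define g where "g x = f x - p x" for x
  have [measurable]: "g \<in> borel_measurable lebesgue" unfolding g_def by measurable
  have g_vanishes: "g x = 0" if "x \<notin> E" for x using that f_vanishes U_memD(3)[OF p(1)] by (simp add: g_def)
  have C: "0 \<le> (\<integral>x. g x * p x \<partial>lebesgue)"
    using minimizer_variational[OF p zero_mem_U] by (simp add: g_def)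
  have "(\<integral>\<^sup>+x. ennreal \<bar>h x * \<bar>g x\<bar>\<bar> \<partial>lebesgue) \<le> ennreal (\<integral>x. g x * p x \<partial>lebesgue)"
    if h: "h \<in> X" "N h \<le> 1" for h
  proof -
    have [measurable]: "h \<in> borel_measurable lebesgue" using measurable[OF h(1)] .
    define tr where "tr k x = sgn (g x) * min \<bar>h x\<bar> (real k) * indicator E x" for k :: nat and x
    have tr_U: "tr k \<in> U" for k unfolding tr_def by (rule truncation_mem_U[OF h]) measurable
    have [measurable]: "tr k \<in> borel_measurable lebesgue" for k using U_memD(5)[OF tr_U] .
    have g_tr: "g x * tr k x = \<bar>g x\<bar> * min \<bar>h x\<bar> (real k)" for k x
      using g_vanishes[of x] by (cases "x \<in> E") (auto simp: tr_def sgn_if)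
    have bound: "(\<integral>\<^sup>+x. ennreal (\<bar>g x\<bar> * min \<bar>h x\<bar> (real k)) \<partial>lebesgue) \<le> ennreal (\<integral>x. g x * p x \<partial>lebesgue)"
      for k
    proof -
      have int: "integrable lebesgue (\<lambda>x. g x * tr k x)"
        using integrable_square_mult[OF dist2_integrable[OF p(1)] U_memD(4)[OF tr_U]] by (simp add: g_def)
      have "(\<integral>\<^sup>+x. ennreal (\<bar>g x\<bar> * min \<bar>h x\<bar> (real k)) \<partial>lebesgue) = ennreal (\<integral>x. g x * tr k x \<partial>lebesgue)"
        using int unfolding g_tr by (intro nn_integral_eq_integral) auto
      also have "\<dots> \<le> ennreal (\<integral>x. g x * p x \<partial>lebesgue)"
        using minimizer_variational[OF p tr_U] by (simp add: g_def ennreal_leI)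
      finally show ?thesis .
    qed
    have "(\<lambda>k. \<integral>\<^sup>+x. ennreal (\<bar>g x\<bar> * min \<bar>h x\<bar> (real k)) \<partial>lebesgue) \<longlonglongrightarrow>
        (\<integral>\<^sup>+x. ennreal \<bar>h x * \<bar>g x\<bar>\<bar> \<partial>lebesgue)"
    proof (rule nn_integral_LIMSEQ)
      show "incseq (\<lambda>k x. ennreal (\<bar>g x\<bar> * min \<bar>h x\<bar> (real k)))"
        by (auto simp: incseq_def le_fun_def intro!: ennreal_leI mult_left_mono)
      show "(\<lambda>k. ennreal (\<bar>g x\<bar> * min \<bar>h x\<bar> (real k))) \<longlonglongrightarrow> ennreal \<bar>h x * \<bar>g x\<bar>\<bar>" for x
        using tendsto_mult_left[OF tendsto_min_of_nat, of "\<bar>g x\<bar>" "\<bar>h x\<bar>"]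
        by (intro tendsto_ennrealI) (simp add: abs_mult mult.commute)
    qed measurable
    then show ?thesis by (rule LIMSEQ_le_const2) (use bound in blast)
  qed
  then show "(\<lambda>x. \<bar>f x - p x\<bar>) \<in> kothe X"
    and "kothe_norm X N (\<lambda>x. \<bar>f x - p x\<bar>) \<le> (\<integral>x. (f x - p x) * p x \<partial>lebesgue)"
    using kothe_memI_unit_ball[OF _ C] kothe_norm_leI_unit_ball[OF _ C] by (simp_all add: g_def)
qed

lemma kothe_separation:
  assumes "\<not> (f \<in> X \<and> N f \<le> 1)"
  shows "\<exists>G\<in>kothe X. ennreal (kothe_norm X N G) < (\<integral>\<^sup>+x. ennreal \<bar>f x * G x\<bar> \<partial>lebesgue)"
proof -
  obtain p where p: "p \<in> U" "dist2 p = dist2_inf" using exists_dist2_minimizer by blast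
  have [measurable]: "p \<in> borel_measurable lebesgue" using U_memD(5) p by auto
  have g2: "integrable lebesgue (\<lambda>x. (f x - p x)\<^sup>2)" by (rule dist2_integrable[OF p(1)])
  have "(\<integral>x. (f x - p x)\<^sup>2 \<partial>lebesgue) \<noteq> 0"
  proof
    assume "(\<integral>x. (f x - p x)\<^sup>2 \<partial>lebesgue) = 0"
    then have "AE x in lebesgue. \<bar>f x\<bar> \<le> \<bar>p x\<bar>"
      using integral_nonneg_eq_0_iff_AE[OF g2] by (auto elim!: eventually_mono)
    then show False using assms ideal_mem[OF U_memD(1)[OF p(1)] f_measurable] U_memD(2)[OF p(1)] by auto
  qed
  moreover have "(\<integral>x. (f x - p x)\<^sup>2 \<partial>lebesgue) \<ge> 0" by simp
  ultimately have pos: "(\<integral>x. (f x - p x)\<^sup>2 \<partial>lebesgue) > 0" by linarith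
  have fg: "integrable lebesgue (\<lambda>x. (f x - p x) * f x)"
    by (rule integrable_square_mult[OF g2 f_square_integrable]) measurable
  have fG: "integrable lebesgue (\<lambda>x. \<bar>f x * \<bar>f x - p x\<bar>\<bar>)"
    using integrable_abs[OF fg] by (simp add: abs_mult mult.commute)
  have "(\<integral>x. (f x - p x) * f x \<partial>lebesgue) = (\<integral>x. (f x - p x) * p x + (f x - p x)\<^sup>2 \<partial>lebesgue)"
    by (simp add: power2_eq_square algebra_simps)
  also have "\<dots> = (\<integral>x. (f x - p x) * p x \<partial>lebesgue) + (\<integral>x. (f x - p x)\<^sup>2 \<partial>lebesgue)"
    using integrable_square_mult[OF g2 U_memD(4)[OF p(1)]] g2 by simp
  finally have "kothe_norm X N (\<lambda>x. \<bar>f x - p x\<bar>) < (\<integral>x. (f x - p x) * f x \<partial>lebesgue)"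
    using residual_kothe_norm[OF p] pos by linarith
  also have "\<dots> \<le> (\<integral>x. \<bar>f x * \<bar>f x - p x\<bar>\<bar> \<partial>lebesgue)"
  proof (rule integral_mono[OF fg fG])
    show "(f x - p x) * f x \<le> \<bar>f x * \<bar>f x - p x\<bar>\<bar>" for x
      using abs_ge_self[of "(f x - p x) * f x"] by (simp add: abs_mult mult.commute)
  qed
  finally have "ennreal (kothe_norm X N (\<lambda>x. \<bar>f x - p x\<bar>)) < ennreal (\<integral>x. \<bar>f x * \<bar>f x - p x\<bar>\<bar> \<partial>lebesgue)"
    using kothe_norm_nonneg[OF residual_kothe_mem[OF p]] by (simp add: ennreal_less_iff)
  also have "\<dots> = (\<integral>\<^sup>+x. ennreal \<bar>f x * \<bar>f x - p x\<bar>\<bar> \<partial>lebesgue)"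
    by (rule nn_integral_eq_integral[OF fG, symmetric]) simp
  finally have "ennreal (kothe_norm X N (\<lambda>x. \<bar>f x - p x\<bar>)) < (\<integral>\<^sup>+x. ennreal \<bar>f x * \<bar>f x - p x\<bar>\<bar> \<partial>lebesgue)" .
  then show ?thesis using residual_kothe_mem[OF p] by blast
qed

end

context quasi_banach_function_space
begin

lemma kothe_quasi_banach_function_space:
  assumes "saturation_property (kothe X)"
  shows "quasi_banach_function_space (kothe X) (kothe_norm X N)"
  unfolding quasi_banach_function_space_def quasi_banach_ideal_space_def quasi_banach_function_space_axioms_def
  using assms kothe_quasi_normed kothe_complete kothe_ideal by blast

lemma
  assumes sat: "saturation_property (kothe X)" and f: "f \<in> X"
  shows kothe_kothe_memI: "f \<in> kothe (kothe X)"
    and kothe_kothe_norm_le: "kothe_norm (kothe X) (kothe_norm X N) f \<le> N f"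
proof -
  interpret dual: quasi_banach_function_space "kothe X" "kothe_norm X N"
    by (rule kothe_quasi_banach_function_space[OF sat])
  have "(\<integral>\<^sup>+x. ennreal \<bar>g x * f x\<bar> \<partial>lebesgue) \<le> ennreal (N f * kothe_norm X N g)" if "g \<in> kothe X" for g
    using kothe_holder_nn[OF f that] by (simp add: mult.commute)
  then show "f \<in> kothe (kothe X)" "kothe_norm (kothe X) (kothe_norm X N) f \<le> N f"
    using dual.kothe_memI[OF measurable[OF f] norm_nonneg[OF f]]
      dual.kothe_norm_leI[OF measurable[OF f] norm_nonneg[OF f]] by auto
qed

lemma exists_indicator_kothe_subset:
  assumes G: "G \<in> kothe X" and F: "F \<in> sets lebesgue"
    and pos: "emeasure lebesgue {x\<in>F. G x \<noteq> 0} > 0"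
  obtains S where "S \<in> sets lebesgue" "S \<subseteq> F" "emeasure lebesgue S > 0" "indicator S \<in> kothe X"
proof -
  have [measurable]: "G \<in> borel_measurable lebesgue" using G unfolding kothe_def by auto
  define S where "S k = {x\<in>F. 1 / real (Suc k) \<le> \<bar>G x\<bar>}" for k
  have S: "S k \<in> sets lebesgue" for k
  proof -
    have "{x\<in>space lebesgue. 1 / real (Suc k) \<le> \<bar>G x\<bar>} \<inter> F \<in> sets lebesgue" using F by measurable
    then show ?thesis unfolding S_def by (simp add: Int_commute Collect_conj_eq)
  qed
  have cover: "{x\<in>F. G x \<noteq> 0} = (\<Union>k. S k)"
  proof (intro equalityI subsetI)
    fix x assume "x \<in> {x\<in>F. G x \<noteq> 0}"
    then obtain k where "1 / real (Suc k) < \<bar>G x\<bar>" "x \<in> F"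
      using reals_Archimedean[of "\<bar>G x\<bar>"] by (auto simp: field_simps)
    then show "x \<in> (\<Union>k. S k)" unfolding S_def by (auto intro: less_imp_le)
  qed (auto simp: S_def)
  have "\<exists>k. emeasure lebesgue (S k) \<noteq> 0"
  proof (rule ccontr)
    assume "\<not> ?thesis"
    then have "emeasure lebesgue (\<Union>k. S k) = 0" by (intro emeasure_UN_eq_0) (use S in blast)+
    then show False using pos unfolding cover by simp
  qed
  then obtain k where k: "emeasure lebesgue (S k) \<noteq> 0" by blast
  have "indicator (S k) \<in> kothe X"
  proof (rule kothe_ideal_mem[OF kothe_scale_mem[OF G, of "real (Suc k)"]])
    show "indicator (S k) \<in> borel_measurable lebesgue" using S by simp
    have "1 \<le> real (Suc k) * \<bar>G x\<bar>" if "x \<in> S k" for x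
      using that unfolding S_def by (simp add: field_simps)
    then show "AE x in lebesgue. \<bar>indicator (S k) x :: real\<bar> \<le> \<bar>real (Suc k) * G x\<bar>"
      by (intro AE_I2) (simp add: indicator_def abs_mult)
  qed
  then show ?thesis using that[OF S] k by (auto simp: S_def zero_less_iff_neq_zero)
qed

end

context banach_function_space_fatou
begin

lemma exists_kothe_separating:
  assumes "E \<in> sets lebesgue" "emeasure lebesgue E < \<infinity>" "f \<in> borel_measurable lebesgue"
    "\<And>x. \<bar>f x\<bar> \<le> B" "\<And>x. x \<notin> E \<Longrightarrow> f x = 0" and "\<not> (f \<in> X \<and> N f \<le> 1)"
  shows "\<exists>G\<in>kothe X. ennreal (kothe_norm X N G) < (\<integral>\<^sup>+x. ennreal \<bar>f x * G x\<bar> \<partial>lebesgue)"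
proof -
  interpret unit_ball_projection X N E f B
    using banach_function_space_fatou_axioms assms(1-5)
    by (intro unit_ball_projection.intro unit_ball_projection_axioms.intro)
  show ?thesis using kothe_separation[OF assms(6)] .
qed

text \<open>A suitable multiple of an indicator in \<open>X\<close> lies outside the unit ball; any dual function
  separating it is nonzero on a set of positive measure.\<close>
lemma kothe_saturation: "saturation_property (kothe X)"
  unfolding saturation_property_def
proof (intro ballI impI)
  fix E :: "'a set" assume E: "E \<in> sets lebesgue" "emeasure lebesgue E > 0"
  obtain n where n: "emeasure lebesgue (E \<inter> ball 0 (real n)) > 0"
    using exists_emeasure_inter_ball_pos[OF E] .
  obtain F where F: "F \<in> sets lebesgue" "F \<subseteq> E \<inter> ball 0 (real n)" "emeasure lebesgue F > 0" "indicator F \<in> X"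
  proof (rule saturation_obtain[OF _ n])
    show "E \<inter> ball 0 (real n) \<in> sets lebesgue" by (rule sets.Int[OF E(1)]) simp
  qed
  have "emeasure lebesgue F \<le> emeasure lebesgue (ball (0::'a) (real n))"
    using F(2) by (intro emeasure_mono) auto
  also have "\<dots> < \<infinity>" using emeasure_bounded_finite[of "ball (0::'a) (real n)"] by simp
  finally have F_finite: "emeasure lebesgue F < \<infinity>" .
  have NF: "N (indicator F) > 0" by (rule norm_indicator_pos[OF F(1,3,4)])
  define c where "c = 2 / N (indicator F)"
  have c: "c > 0" using NF by (simp add: c_def)
  define f where "f x = c * indicator F x" for x
  have fX: "f \<in> X" unfolding f_def by (rule scale_mem[OF F(4)])
  have "N f = 2" unfolding f_def using norm_scale[OF F(4), of c] c NF by (simp add: c_def)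
  moreover have "\<bar>f x\<bar> \<le> c" "x \<notin> F \<Longrightarrow> f x = 0" for x using c by (simp_all add: f_def indicator_def)
  ultimately obtain G where
    G: "G \<in> kothe X" "ennreal (kothe_norm X N G) < (\<integral>\<^sup>+x. ennreal \<bar>f x * G x\<bar> \<partial>lebesgue)"
    using exists_kothe_separating[OF F(1) F_finite measurable[OF fX]] by force
  have [measurable]: "G \<in> borel_measurable lebesgue" using G(1) unfolding kothe_def by auto
  have "emeasure lebesgue {x\<in>F. G x \<noteq> 0} \<noteq> 0"
  proof
    assume "emeasure lebesgue {x\<in>F. G x \<noteq> 0} = 0"
    moreover have "{x\<in>F. G x \<noteq> 0} = {x\<in>space lebesgue. G x \<noteq> 0} \<inter> F" by auto
    ultimately have "AE x in lebesgue. x \<notin> {x\<in>F. G x \<noteq> 0}"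
      using F(1) by (intro AE_I'[of "{x\<in>F. G x \<noteq> 0}"]) auto
    then have "(\<integral>\<^sup>+x. ennreal \<bar>f x * G x\<bar> \<partial>lebesgue) = (\<integral>\<^sup>+x. 0 \<partial>(lebesgue :: 'a measure))"
      by (intro nn_integral_cong_AE) (auto simp: f_def indicator_def elim!: eventually_mono)
    then show False using G(2) by simp
  qed
  then obtain S where "S \<in> sets lebesgue" "S \<subseteq> F" "emeasure lebesgue S > 0" "indicator S \<in> kothe X"
    using exists_indicator_kothe_subset[OF G(1) F(1)] by (auto simp: zero_less_iff_neq_zero)
  then show "\<exists>S\<in>sets lebesgue. S \<subseteq> E \<and> 0 < emeasure lebesgue S \<and> indicator S \<in> kothe X"
    using F(2) by blast
qed

lemma kothe_kothe_bounded_mem: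
  assumes f: "f \<in> kothe (kothe X)" and E: "E \<in> sets lebesgue" "emeasure lebesgue E < \<infinity>"
    and f_bounded: "\<And>x. \<bar>f x\<bar> \<le> B" and f_vanishes: "\<And>x. x \<notin> E \<Longrightarrow> f x = 0"
  shows "f \<in> X \<and> N f \<le> kothe_norm (kothe X) (kothe_norm X N) f"
proof -
  interpret dual: quasi_banach_function_space "kothe X" "kothe_norm X N"
    by (rule kothe_quasi_banach_function_space[OF kothe_saturation])
  define L where "L = kothe_norm (kothe X) (kothe_norm X N) f"
  have L: "0 \<le> L" unfolding L_def by (rule dual.kothe_norm_nonneg[OF f])
  have fm[measurable]: "f \<in> borel_measurable lebesgue" using f unfolding kothe_def by auto
  have scaled: "f \<in> X \<and> N f \<le> r" if r: "r > L" for r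
  proof -
    have r_pos: "r > 0" using r L by simp
    define f' where "f' x = inverse r * f x" for x
    have f': "f' \<in> X \<and> N f' \<le> 1"
    proof (rule ccontr)
      assume "\<not> (f' \<in> X \<and> N f' \<le> 1)"
      then obtain G where G: "G \<in> kothe X" "ennreal (kothe_norm X N G) < (\<integral>\<^sup>+x. ennreal \<bar>f' x * G x\<bar> \<partial>lebesgue)"
        using exists_kothe_separating[OF E, of f' "inverse r * \<bar>B\<bar>"] f_vanishes f_bounded r_pos
        unfolding f'_def by (force simp: abs_mult intro: mult_left_mono order_trans[OF _ abs_ge_self])
      have "(\<integral>\<^sup>+x. ennreal \<bar>f' x * G x\<bar> \<partial>lebesgue) = ennreal (inverse r) * (\<integral>\<^sup>+x. ennreal \<bar>G x * f x\<bar> \<partial>lebesgue)"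
        unfolding f'_def using r_pos dual.kothe_abs_prod_measurable[OF G(1) f]
        by (subst nn_integral_cmult[symmetric]) (auto intro!: nn_integral_cong simp: abs_mult ennreal_mult mult_ac)
      also have "\<dots> \<le> ennreal (inverse r) * ennreal (kothe_norm X N G * L)"
        unfolding L_def by (intro mult_left_mono dual.kothe_holder_nn[OF G(1) f]) auto
      also have "\<dots> = ennreal (kothe_norm X N G * (L / r))"
        using r_pos kothe_norm_nonneg[OF G(1)] L by (simp add: ennreal_mult[symmetric] field_simps)
      also have "\<dots> \<le> ennreal (kothe_norm X N G)"
        using r r_pos L kothe_norm_nonneg[OF G(1)] by (intro ennreal_leI mult_left_le) simp_all
      finally show False using G(2) by simp
    qed
    have f_eq: "f = (\<lambda>x. r * f' x)" unfolding f'_def using r_pos by (intro ext) simp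
    have "N f = r * N f'" unfolding f_eq using norm_scale[of f' r] f' r_pos by simp
    then have "N f \<le> r" using f' r_pos by (simp add: mult_left_le)
    moreover have "f \<in> X" unfolding f_eq using scale_mem f' by blast
    ultimately show ?thesis by blast
  qed
  have "N f \<le> L"
  proof (rule field_le_epsilon)
    show "N f \<le> L + e" if "0 < e" for e using scaled[of "L + e"] that by simp
  qed
  then show ?thesis using scaled[of "L + 1"] unfolding L_def by simp
qed

text \<open>Truncate \<open>f\<close> to bounded functions with bounded support and pass to the limit with the
  Fatou property.\<close>
lemma kothe_kothe_mem:
  assumes f: "f \<in> kothe (kothe X)"
  shows "f \<in> X \<and> N f \<le> kothe_norm (kothe X) (kothe_norm X N) f"
proof -
  interpret dual: quasi_banach_function_space "kothe X" "kothe_norm X N"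
    by (rule kothe_quasi_banach_function_space[OF kothe_saturation])
  define L where "L = kothe_norm (kothe X) (kothe_norm X N) f"
  have [measurable]: "f \<in> borel_measurable lebesgue" using f unfolding kothe_def by auto
  define t where "t n x = min \<bar>f x\<bar> (real n) * indicator (ball 0 (real n)) x" for n :: nat and x :: 'a
  have [measurable]: "ball (0::'a) (real n) \<in> sets lebesgue" for n by simp
  have tm: "t n \<in> borel_measurable lebesgue" for n unfolding t_def by measurable
  have "AE x in lebesgue. \<bar>t n x\<bar> \<le> \<bar>f x\<bar>" for n by (intro AE_I2) (simp add: t_def indicator_def)
  then have tY: "t n \<in> kothe (kothe X)" and tL: "kothe_norm (kothe X) (kothe_norm X N) (t n) \<le> L" for n
    using dual.kothe_ideal_mem[OF f tm] dual.kothe_ideal_norm_le[OF f tm] unfolding L_def by auto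
  have tX: "t n \<in> X \<and> N (t n) \<le> L" for n
  proof -
    have "t n \<in> X \<and> N (t n) \<le> kothe_norm (kothe X) (kothe_norm X N) (t n)"
    proof (rule kothe_kothe_bounded_mem[OF tY[of n]])
      show "ball 0 (real n) \<in> sets lebesgue" by simp
      show "emeasure lebesgue (ball (0::'a) (real n)) < \<infinity>"
        using emeasure_bounded_finite[of "ball (0::'a) (real n)"] by simp
      show "\<bar>t n x\<bar> \<le> real n" for x by (simp add: t_def indicator_def)
      show "x \<notin> ball 0 (real n) \<Longrightarrow> t n x = 0" for x by (simp add: t_def)
    qed
    then show ?thesis using tL[of n] by simp
  qed
  have "(\<lambda>n. t n x) \<longlonglongrightarrow> \<bar>f x\<bar>" for x
  proof (rule tendsto_eventually)
    obtain n0 :: nat where n0: "max \<bar>f x\<bar> (norm x) < real n0" using reals_Archimedean2 by blast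
    show "\<forall>\<^sub>F n in sequentially. t n x = \<bar>f x\<bar>"
      using n0 by (intro eventually_sequentiallyI[of n0]) (auto simp: t_def indicator_def)
  qed
  moreover have "0 \<le> t n x" "t n x \<le> t (Suc n) x" for n x by (auto simp: t_def indicator_def)
  ultimately have "f \<in> X" "N f \<le> L"
    using fatou_mem_norm_le[of t L f] tX by auto
  then show ?thesis unfolding L_def by simp
qed

theorem kothe_kothe_eq:
  shows "kothe (kothe X) = X"
    and "f \<in> X \<Longrightarrow> kothe_norm (kothe X) (kothe_norm X N) f = N f"
  using kothe_kothe_mem kothe_kothe_memI[OF kothe_saturation] kothe_kothe_norm_le[OF kothe_saturation]
  by (auto intro: antisym)

end

section \<open>The classes \<open>A\<close>, \<open>A\<^sub>s\<^sub>t\<^sub>r\<^sub>o\<^sub>n\<^sub>g\<close> and \<open>A\<^sub>s\<^sub>p\<^sub>a\<^sub>r\<^sub>s\<^sub>e\<close>\<close>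

lemma quasi_banach_function_spaceI: "quasi_BFS X N \<Longrightarrow> quasi_banach_function_space X N"
  unfolding quasi_BFS_def quasi_banach_function_space_def quasi_banach_ideal_space_def
    quasi_banach_function_space_axioms_def by blast

lemma banach_function_space_fatouI:
  "BFS X N \<Longrightarrow> fatou_property X N \<Longrightarrow> banach_function_space_fatou X N"
  unfolding BFS_def banach_function_space_fatou_def banach_function_space_fatou_axioms_def
  using quasi_banach_function_spaceI by blast

lemma kothe_of_in_A:
  fixes X :: "('a::euclidean_space \<Rightarrow> real) set"
  assumes X: "quasi_BFS X N" and A: "in_A X N"
  shows "saturation_property (kothe X) \<and> BFS (kothe X) (kothe_norm X N) \<and>
    in_A (kothe X) (kothe_norm X N) \<and> A_const (kothe X) (kothe_norm X N) \<le> A_const X N"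
proof -
  interpret quasi_banach_function_space X N using X by (rule quasi_banach_function_spaceI)
  have cubes: "\<And>Q. cube Q \<Longrightarrow> indicator Q \<in> X \<and> indicator Q \<in> kothe X"
    and bdd: "bdd_above (A_ratios X N)"
    using A unfolding in_A_def by auto
  have sat: "saturation_property (kothe X)" using kothe_saturation_of_cubes cubes by blast
  have le: "y \<le> A_const X N" if y: "y \<in> A_ratios (kothe X) (kothe_norm X N)" for y
  proof -
    obtain Q where Q: "cube Q" and y: "y = kothe_norm X N (indicator Q) *
        kothe_norm (kothe X) (kothe_norm X N) (indicator Q) / measure lebesgue Q"
      using y unfolding A_ratios_def by blast
    have "kothe_norm X N (indicator Q) * kothe_norm (kothe X) (kothe_norm X N) (indicator Q)
        \<le> kothe_norm X N (indicator Q) * N (indicator Q)"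
      using kothe_kothe_norm_le[OF sat] cubes[OF Q] kothe_norm_nonneg by (simp add: mult_left_mono)
    then have "y \<le> N (indicator Q) * kothe_norm X N (indicator Q) / measure lebesgue Q"
      unfolding y using measure_nonneg by (simp add: divide_right_mono mult.commute)
    also have "\<dots> \<le> A_const X N" unfolding A_const_def using Q bdd
      by (intro cSup_upper) (auto simp: A_ratios_def)
    finally show ?thesis .
  qed
  have "bdd_above (A_ratios (kothe X) (kothe_norm X N))" using le by (rule bdd_aboveI)
  then have "in_A (kothe X) (kothe_norm X N)"
    unfolding in_A_def using cubes kothe_kothe_memI[OF sat] by blast
  moreover have "A_const (kothe X) (kothe_norm X N) \<le> A_const X N"
    unfolding A_const_def[of "kothe X"] using le exists_cube unfolding A_ratios_def
    by (intro cSup_least) blast+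
  ultimately show ?thesis using sat kothe_BFS_of_saturation by blast
qed

lemma kothe_of_avg_bound:
  fixes X :: "('a::euclidean_space \<Rightarrow> real) set"
  assumes X: "quasi_BFS X N" and cls: "countable_cube_class adm" and bound: "\<exists>C. avg_bound adm X N C"
  shows "saturation_property (kothe X) \<and> BFS (kothe X) (kothe_norm X N) \<and>
    (\<exists>C. avg_bound adm (kothe X) (kothe_norm X N) C) \<and>
    Inf {C. 0 \<le> C \<and> avg_bound adm (kothe X) (kothe_norm X N) C} \<le> Inf {C. 0 \<le> C \<and> avg_bound adm X N C}"
proof -
  interpret quasi_banach_function_space X N using X by (rule quasi_banach_function_spaceI)
  obtain C where C: "avg_bound adm X N C" using bound by blast
  have sat: "saturation_property (kothe X)"
    using kothe_saturation_of_cubes indicator_cube_kothe_of_avg_bound[OF cls C] by blast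
  have "Inf {C. 0 \<le> C \<and> avg_bound adm (kothe X) (kothe_norm X N) C} \<le> Inf {C. 0 \<le> C \<and> avg_bound adm X N C}"
    using avg_bound_kothe[OF cls] avg_bound_const_nonneg[OF cls C] C
    by (intro cInf_superset_mono) (auto intro: bdd_belowI[of _ 0])
  then show ?thesis using sat kothe_BFS_of_saturation avg_bound_kothe[OF cls C] by blast
qed

context banach_function_space_fatou
begin

lemma A_ratios_kothe:
  assumes "\<And>Q. cube Q \<Longrightarrow> indicator Q \<in> X"
  shows "A_ratios (kothe X) (kothe_norm X N) = A_ratios X N"
  unfolding A_ratios_def using kothe_kothe_eq(2)[OF assms] by (metis (no_types, opaque_lifting) mult.commute)

lemma avg_bound_kothe_iff:
  assumes cls: "countable_cube_class adm"
  shows "avg_bound adm (kothe X) (kothe_norm X N) C \<longleftrightarrow> avg_bound adm X N C"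
proof
  interpret dual: quasi_banach_function_space "kothe X" "kothe_norm X N"
    by (rule kothe_quasi_banach_function_space[OF kothe_saturation])
  assume "avg_bound adm (kothe X) (kothe_norm X N) C"
  then have "avg_bound adm (kothe (kothe X)) (kothe_norm (kothe X) (kothe_norm X N)) C"
    by (rule dual.avg_bound_kothe[OF cls])
  then show "avg_bound adm X N C"
    unfolding avg_bound_def kothe_kothe_eq(1) by (metis kothe_kothe_eq(2))
qed (rule avg_bound_kothe[OF cls])

end

lemma kothe_in_A_iff:
  assumes "BFS X N" "fatou_property X N"
  shows "(in_A X N \<longleftrightarrow> in_A (kothe X) (kothe_norm X N)) \<and>
    (in_A X N \<longrightarrow> A_const (kothe X) (kothe_norm X N) = A_const X N)"
proof -
  interpret banach_function_space_fatou X N using assms by (rule banach_function_space_fatouI)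
  show ?thesis using A_ratios_kothe kothe_kothe_eq(1) unfolding in_A_def A_const_def by metis
qed

lemma kothe_avg_bound_iff:
  assumes "BFS X N" "fatou_property X N" and cls: "countable_cube_class adm"
  shows "((\<exists>C. avg_bound adm X N C) \<longleftrightarrow> (\<exists>C. avg_bound adm (kothe X) (kothe_norm X N) C)) \<and>
    Inf {C. 0 \<le> C \<and> avg_bound adm (kothe X) (kothe_norm X N) C} = Inf {C. 0 \<le> C \<and> avg_bound adm X N C}"
proof -
  interpret banach_function_space_fatou X N using assms(1,2) by (rule banach_function_space_fatouI)
  show ?thesis using avg_bound_kothe_iff[OF cls] by simp
qed

theorem proposition3p7:
  fixes X :: "('a::euclidean_space \<Rightarrow> real) set" and N :: "('a \<Rightarrow> real) \<Rightarrow> real"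
  shows
   "(quasi_BFS X N \<and> in_A X N \<longrightarrow>
       saturation_property (kothe X) \<and> BFS (kothe X) (kothe_norm X N) \<and>
       in_A (kothe X) (kothe_norm X N) \<and> A_const (kothe X) (kothe_norm X N) \<le> A_const X N) \<and>
    (BFS X N \<and> fatou_property X N \<longrightarrow>
       (in_A X N \<longleftrightarrow> in_A (kothe X) (kothe_norm X N)) \<and>
       (in_A X N \<longrightarrow> A_const (kothe X) (kothe_norm X N) = A_const X N)) \<and>
    (quasi_BFS X N \<and> in_A_strong X N \<longrightarrow>
       saturation_property (kothe X) \<and> BFS (kothe X) (kothe_norm X N) \<and>
       in_A_strong (kothe X) (kothe_norm X N) \<and> A_strong_const (kothe X) (kothe_norm X N) \<le> A_strong_const X N) \<and>
    (BFS X N \<and> fatou_property X N \<longrightarrow>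
       (in_A_strong X N \<longleftrightarrow> in_A_strong (kothe X) (kothe_norm X N)) \<and>
       (in_A_strong X N \<longrightarrow> A_strong_const (kothe X) (kothe_norm X N) = A_strong_const X N)) \<and>
    (quasi_BFS X N \<and> in_A_sparse X N \<longrightarrow>
       saturation_property (kothe X) \<and> BFS (kothe X) (kothe_norm X N) \<and>
       in_A_sparse (kothe X) (kothe_norm X N) \<and> A_sparse_const (kothe X) (kothe_norm X N) \<le> A_sparse_const X N) \<and>
    (BFS X N \<and> fatou_property X N \<longrightarrow>
       (in_A_sparse X N \<longleftrightarrow> in_A_sparse (kothe X) (kothe_norm X N)) \<and>
       (in_A_sparse X N \<longrightarrow> A_sparse_const (kothe X) (kothe_norm X N) = A_sparse_const X N))"
  using kothe_of_in_A[of X N] kothe_in_A_iff[of X N]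
    kothe_of_avg_bound[OF _ countable_cube_class_disjoint_cubes, of X N]
    kothe_of_avg_bound[OF _ countable_cube_class_sparse, of X N]
    kothe_avg_bound_iff[OF _ _ countable_cube_class_disjoint_cubes, of X N]
    kothe_avg_bound_iff[OF _ _ countable_cube_class_sparse, of X N]
  unfolding in_A_strong_def A_strong_const_def in_A_sparse_def A_sparse_const_def
  by blast

end
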